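(* Let $q$ be an indeterminate, and in the algebra $\mathbf{Sym}$ of noncommutative symmetric functions over $\mathbb{C}(q)$ (generated by $S_1,S_2,\dots$, with $S_0=1$) define $g_0=1$ and, for $n\ge1$, $$(q^n-1)\,g_n=\sum_{k=1}^{n} S_k\sum_{\substack{j_1+\cdots+j_{k+1}=n-k\\ j_i\ge 0}} g_{j_1}\cdots g_{j_{k+1}},\qquad \tilde g_n=(q)_n g_n,\ (q)_n=\prod_{k=1}^n(q^k-1).$$ Then for every $n\ge1$ and every composition $I$ of $n$, the coefficient of the ribbon $R_I$ in $\tilde g_n$ equals $$\sum_{\sigma\in\mathfrak S_n} q^{\mathrm{inv}(\sigma)-\mathrm{inv}(\alpha)+\mathrm{inv}(\alpha,D)},$$ where, for each $\sigma$, $\alpha$ is the permutation with the fewest inversions in the sylvester class of $\sigma$, $D$ is the descent set of the conjugate composition $\tilde I$ of $I$, and $\mathrm{inv}(\alpha,D)$ is the number of pairs $1\le i<j\le n$ with $\alpha_i>\alpha_j$ and $j-1\in D$.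
   Context: For a composition $I=(i_1,\dots,i_r)$ of $n$, $S^I=S_{i_1}\cdots S_{i_r}$; the ribbon basis is $R_I=\sum_J(-1)^{\ell(I)-\ell(J)}S^J$, summed over compositions $J$ of $n$ coarser than $I$ ($\ell$ = number of parts). The descent set of $I$ is $D(I)=\{i_1,i_1+i_2,\dots,i_1+\cdots+i_{r-1}\}$, and the conjugate composition $\tilde I$ is the composition of $n$ with $D(\tilde I)=\{n-d: d\in\{1,\dots,n-1\}\setminus D(I)\}$. $\mathrm{inv}(\sigma)$ is the number of inversions of a permutation $\sigma$ (written as a word $\sigma_1\cdots\sigma_n$). The decreasing binary tree of a word $w=unv$ with distinct letters and maximal letter $n$ is the binary tree with root $n$, left subtree the decreasing tree of $u$ and right subtree that of $v$ (the empty word giving the empty tree). Two permutations $\sigma,\tau\in\mathfrak S_n$ are sylvester-equivalent if the decreasing binary trees of $\sigma^{-1}$ and $\tau^{-1}$ have the same shape; the equivalence classes are sylvester classes, and each contains a unique permutation with the fewest inversions. *)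

theory Defs
  imports "HOL-Computational_Algebra.Computational_Algebra" "HOL-Library.Tree"
begin

type_synonym K = "complex poly fract"

definition qq :: K where "qq = Fract [:0, 1:] 1"

definition qpoch :: "nat \<Rightarrow> K" where
  "qpoch n = (\<Prod>k=1..n. qq ^ k - 1)"

text \<open>Sym is the free associative algebra on S_1, S_2, ...; its elements are
  represented by their coefficient functions in the basis S^I, I ranging over
  words (compositions) in positive integers.  Product = concatenation.\<close>

type_synonym nsym = "nat list \<Rightarrow> K"

definition nsym_one :: nsym where
  "nsym_one = (\<lambda>w. if w = [] then 1 else 0)"

definition nsym_mult :: "nsym \<Rightarrow> nsym \<Rightarrow> nsym" where
  "nsym_mult f g = (\<lambda>w. \<Sum>i\<le>length w. f (take i w) * g (drop i w))"

definition nsym_smult :: "K \<Rightarrow> nsym \<Rightarrow> nsym" where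
  "nsym_smult c f = (\<lambda>w. c * f w)"

definition nsym_sum :: "'a set \<Rightarrow> ('a \<Rightarrow> nsym) \<Rightarrow> nsym" where
  "nsym_sum A F = (\<lambda>w. \<Sum>a\<in>A. F a w)"

definition nsym_prod :: "nsym list \<Rightarrow> nsym" where
  "nsym_prod xs = foldr nsym_mult xs nsym_one"

definition S :: "nat \<Rightarrow> nsym" where
  "S k = (if k = 0 then nsym_one else (\<lambda>w. if w = [k] then 1 else 0))"

definition Spow :: "nat list \<Rightarrow> nsym" where
  "Spow I = nsym_prod (map S I)"

definition comps :: "nat \<Rightarrow> nat list set" where
  "comps n = {I. sum_list I = n \<and> 0 \<notin> set I}"

definition wcomps :: "nat \<Rightarrow> nat \<Rightarrow> nat list set" where
  "wcomps k m = {js. length js = k \<and> sum_list js = m}"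

definition descents :: "nat list \<Rightarrow> nat set" where
  "descents I = {sum_list (take i I) | i. 1 \<le> i \<and> i < length I}"

definition ribbon :: "nat list \<Rightarrow> nsym" where
  "ribbon I = nsym_sum {J \<in> comps (sum_list I). descents J \<subseteq> descents I}
      (\<lambda>J. nsym_smult ((-1) ^ (length I - length J)) (Spow J))"

definition conj_comp :: "nat list \<Rightarrow> nat list" where
  "conj_comp I = (let n = sum_list I in
     THE J. J \<in> comps n \<and> descents J = (\<lambda>d. n - d) ` ({1..n-1} - descents I))"

definition perms :: "nat \<Rightarrow> nat list set" where
  "perms n = {s. distinct s \<and> set s = {1..n}}"

definition invs :: "nat list \<Rightarrow> nat" where
  "invs s = card {(i, j). i < j \<and> j < length s \<and> s ! i > s ! j}"

text \<open>inv(alpha, D): pairs 1<=i<j<=n (1-indexed) with alpha_i > alpha_j and j-1 in D;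
  in 0-indexed positions j' = j - 1 this reads j' in D.\<close>
definition invD :: "nat list \<Rightarrow> nat set \<Rightarrow> nat" where
  "invD s D = card {(i, j). i < j \<and> j < length s \<and> s ! i > s ! j \<and> j \<in> D}"

definition perm_inverse :: "nat list \<Rightarrow> nat list" where
  "perm_inverse s = map (\<lambda>i. (THE p. p < length s \<and> s ! p = i) + 1) [1..<length s + 1]"

lemma takeWhile_neq_less:
  "m \<in> set w \<Longrightarrow> length (takeWhile (\<lambda>y. y \<noteq> m) w) < length w"
  by (induction w) auto

lemma takeWhile_neq_Max_less:
  "length (takeWhile (\<lambda>y. y \<noteq> Max (set (x # xs))) (x # xs)) < Suc (length xs)"
proof -
  have "Max (set (x # xs)) \<in> set (x # xs)" by (rule Max_in) auto
  from takeWhile_neq_less[OF this] show ?thesis by (simp only: length_Cons)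
qed

lemma tl_dropWhile_less: "length (tl (dropWhile P (x # xs))) < Suc (length xs)"
proof -
  have "length (dropWhile P (x # xs)) \<le> Suc (length xs)"
    using length_dropWhile_le[of P "x # xs"] by simp
  then show ?thesis by simp
qed

function dtree :: "nat list \<Rightarrow> nat tree" where
  "dtree [] = Leaf"
| "dtree (x # xs) =
     (let m = Max (set (x # xs)) in
      Node (dtree (takeWhile (\<lambda>y. y \<noteq> m) (x # xs))) m
           (dtree (tl (dropWhile (\<lambda>y. y \<noteq> m) (x # xs)))))"
  by pat_completeness auto
termination
  apply (relation "measure length")
    apply simp
   apply (simp only: in_measure Let_def length_Cons takeWhile_neq_Max_less)
  apply (simp only: in_measure length_Cons tl_dropWhile_less)
  done

definition shape :: "nat tree \<Rightarrow> unit tree" where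
  "shape t = map_tree (\<lambda>_. ()) t"

definition sylv_equiv :: "nat list \<Rightarrow> nat list \<Rightarrow> bool" where
  "sylv_equiv s t \<longleftrightarrow> shape (dtree (perm_inverse s)) = shape (dtree (perm_inverse t))"

definition sylv_class :: "nat \<Rightarrow> nat list \<Rightarrow> nat list set" where
  "sylv_class n s = {t \<in> perms n. sylv_equiv s t}"

definition sylv_min :: "nat \<Rightarrow> nat list \<Rightarrow> nat list" where
  "sylv_min n s = (THE a. a \<in> sylv_class n s \<and> (\<forall>b\<in>sylv_class n s. invs a \<le> invs b))"

definition ribbon_coef :: "nat \<Rightarrow> nat list \<Rightarrow> K" where
  "ribbon_coef n I = (\<Sum>s\<in>perms n.
      let a = sylv_min n s in
      qq ^ (invs s - invs a + invD a (descents (conj_comp I))))"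

end

theory Submission
  imports Defs
begin

text \<open>
  Expand over binary trees. For a tree t with n nodes let h_t = \<Prod>_v (q^{|t_v|} - 1) be the
  q-hook product over its subtrees t_v, and let c(t) be the word of the sizes of the right
  subtrees, in reverse postorder. Then g_n = \<Sum>_t h_t^{-1} E_t, where
  E_t = \<Sum>_I \<Prod>_{d \<notin> D(I)} (q^{c_d(t)} - 1) S^I: cutting a tree at its root turns the
  defining recursion into an identity between these sums, and the recursion has only one
  solution.

  On the other side, the permutations \<sigma> whose inverse has a decreasing tree of shape t satisfy
  \<Sum> q^{inv \<sigma>} = q^{inv \<alpha>} (q)_n / h_t, a q-hook length formula proved by splitting at
  the maximal letter and counting with Gaussian coefficients; moreover, for the minimal element
  \<alpha> of the class and D the descent set of the conjugate of I,
  inv(\<alpha>, D) = \<Sum>_{d \<notin> D(I)} c_d(t). So the coefficient of R_I is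
  \<Sum>_t (q)_n / h_t \<Prod>_{d \<notin> D(I)} q^{c_d(t)}, and the inversion formula between the ribbon
  and the S basis, \<Sum>_{I, D(J) \<subseteq> D(I)} (-1)^{l(I)-l(J)} \<Prod>_{d \<notin> D(I)} x_d =
  \<Prod>_{d \<notin> D(J)} (x_d - 1), turns it into (q)_n g_n.
\<close>

lemma qq_power: "qq ^ m = Fract ([:0, 1:] ^ m) 1"
  by (induction m) (simp_all add: qq_def One_fract_def)

lemma qq_nonzero: "qq \<noteq> 0"
  unfolding qq_def by (simp add: Zero_fract_def eq_fract)

lemma qq_power_neq_one [simp]: "m \<noteq> 0 \<Longrightarrow> qq ^ m \<noteq> 1"
proof
  assume m: "m \<noteq> 0" and "qq ^ m = 1"
  then have "([:0, 1:] :: complex poly) ^ m = 1"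
    by (simp add: qq_power One_fract_def eq_fract)
  then have "degree (([:0, 1:] :: complex poly) ^ m) = 0" by simp
  with m show False by (simp add: degree_power_eq)
qed

lemma qpoch_0: "qpoch 0 = 1"
  by (simp add: qpoch_def)

lemma qpoch_Suc: "qpoch (Suc n) = qpoch n * (qq ^ Suc n - 1)"
  by (simp add: qpoch_def)


lemma nsym_sum_apply [simp]: "nsym_sum A F w = (\<Sum>a\<in>A. F a w)"
  by (simp add: nsym_sum_def)

lemma nsym_smult_apply [simp]: "nsym_smult c f w = c * f w"
  by (simp add: nsym_smult_def)

lemma nsym_one_Nil [simp]: "nsym_one [] = 1"
  and nsym_one_Cons [simp]: "nsym_one (k # w) = 0"
  by (simp_all add: nsym_one_def)

lemma nsym_mult_Nil [simp]: "nsym_mult f g [] = f [] * g []"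
  by (simp add: nsym_mult_def)

lemma nsym_mult_Cons:
  "nsym_mult f g (k # w) = f [] * g (k # w) + nsym_mult (\<lambda>u. f (k # u)) g w"
  unfolding nsym_mult_def
  by (simp only: length_Cons sum.atMost_Suc_shift take_Suc_Cons drop_Suc_Cons take_0 drop_0)

lemma nsym_mult_assoc: "nsym_mult (nsym_mult f g) h = nsym_mult f (nsym_mult g h)"
proof
  fix w
  have linear: "nsym_mult (\<lambda>u. c * a u + b u) h w = c * nsym_mult a h w + nsym_mult b h w"
    for a b c h w
    unfolding nsym_mult_def by (simp add: algebra_simps sum.distrib sum_distrib_left)
  show "nsym_mult (nsym_mult f g) h w = nsym_mult f (nsym_mult g h) w"
  proof (induction w arbitrary: f g h)
    case (Cons k w)
    then show ?case
      by (simp add: nsym_mult_Cons linear algebra_simps)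
  qed simp
qed

lemma nsym_mult_zero_left: "nsym_mult (\<lambda>u. 0) f = (\<lambda>u. 0)"
  by (simp add: nsym_mult_def)

lemma nsym_mult_one_left: "nsym_mult nsym_one f = f"
proof
  fix w show "nsym_mult nsym_one f w = f w"
    by (cases w) (simp_all add: nsym_mult_Cons nsym_mult_zero_left)
qed

lemma nsym_mult_one_right: "nsym_mult f nsym_one = f"
proof
  fix w show "nsym_mult f nsym_one w = f w"
    by (induction w arbitrary: f) (simp_all add: nsym_mult_Cons)
qed

lemma nsym_mult_sum_left:
  "finite A \<Longrightarrow> nsym_mult (nsym_sum A F) h = nsym_sum A (\<lambda>a. nsym_mult (F a) h)"
  by (rule ext) (simp add: nsym_mult_def sum_distrib_right sum.swap[of _ A])

lemma nsym_mult_sum_right: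
  "finite A \<Longrightarrow> nsym_mult h (nsym_sum A F) = nsym_sum A (\<lambda>a. nsym_mult h (F a))"
  by (rule ext) (simp add: nsym_mult_def sum_distrib_left sum.swap[of _ A])

lemma nsym_mult_smult_left: "nsym_mult (nsym_smult c f) h = nsym_smult c (nsym_mult f h)"
  by (rule ext) (simp add: nsym_mult_def sum_distrib_left algebra_simps)

lemma nsym_mult_smult_right: "nsym_mult h (nsym_smult c f) = nsym_smult c (nsym_mult h f)"
  by (rule ext) (simp add: nsym_mult_def sum_distrib_left algebra_simps)

lemma nsym_prod_append: "nsym_prod (xs @ ys) = nsym_mult (nsym_prod xs) (nsym_prod ys)"
  by (induction xs) (simp_all add: nsym_prod_def nsym_mult_one_left nsym_mult_assoc)

lemma S_Nil [simp]: "k \<noteq> 0 \<Longrightarrow> S k [] = 0"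
  by (simp add: S_def)

lemma nsym_mult_S_Cons:
  assumes "k \<ge> 1"
  shows "nsym_mult (S k) f (j # w) = (if j = k then f w else 0)"
proof -
  have "(\<lambda>u. S k (j # u)) = (if j = k then nsym_one else (\<lambda>u. 0))"
    using assms by (auto simp: S_def nsym_one_def)
  with assms show ?thesis
    by (cases k) (simp_all add: nsym_mult_Cons nsym_mult_one_left nsym_mult_zero_left)
qed

lemma Spow_apply: "0 \<notin> set J \<Longrightarrow> Spow J w = (if w = J then 1 else 0)"
proof (induction J arbitrary: w)
  case Nil
  then show ?case by (simp add: Spow_def nsym_prod_def nsym_one_def)
next
  case (Cons k J)
  then have "Spow (k # J) = nsym_mult (S k) (Spow J)" "k \<ge> 1"
    by (simp_all add: Spow_def nsym_prod_def)
  with Cons show ?case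
    by (cases w) (auto simp: nsym_mult_S_Cons)
qed

text \<open>The linear map with S^{(k) @ I} \<mapsto> S^{(k+1) @ I} and 1 \<mapsto> 0.\<close>

definition raise_first :: "nsym \<Rightarrow> nsym" where
  "raise_first f = (\<lambda>w. case w of [] \<Rightarrow> 0 | k # u \<Rightarrow> if k \<ge> 2 then f ((k - 1) # u) else 0)"

lemma raise_first_Nil [simp]: "raise_first f [] = 0"
  and raise_first_Cons: "raise_first f (k # u) = (if k \<ge> 2 then f ((k - 1) # u) else 0)"
  by (simp_all add: raise_first_def)

lemma raise_first_mult:
  assumes "f [] = 0"
  shows "raise_first (nsym_mult f g) = nsym_mult (raise_first f) g"
proof
  fix w
  show "raise_first (nsym_mult f g) w = nsym_mult (raise_first f) g w"
  proof (cases w)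
    case (Cons k u)
    have "(\<lambda>v. raise_first f (k # v)) = (if k \<ge> 2 then (\<lambda>v. f ((k - 1) # v)) else (\<lambda>v. 0))"
      by (auto simp: raise_first_Cons)
    with assms Cons show ?thesis
      by (simp add: raise_first_Cons nsym_mult_Cons nsym_mult_zero_left)
  qed simp
qed

lemma raise_first_S_mult:
  assumes "k \<ge> 1"
  shows "raise_first (nsym_mult (S k) f) = nsym_mult (S (Suc k)) f"
proof
  fix w
  show "raise_first (nsym_mult (S k) f) w = nsym_mult (S (Suc k)) f w"
    using assms by (cases w) (auto simp: raise_first_Cons nsym_mult_S_Cons)
qed

lemma raise_first_sum: "raise_first (nsym_sum A F) = nsym_sum A (\<lambda>a. raise_first (F a))"
  by (rule ext) (auto simp: raise_first_def split: list.splits)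

lemma raise_first_smult: "raise_first (nsym_smult c F) = nsym_smult c (raise_first F)"
  by (rule ext) (auto simp: raise_first_def split: list.splits)


definition trees :: "nat \<Rightarrow> unit tree set" where
  "trees n = {t. size t = n}"

lemma trees_0: "trees 0 = {Leaf}"
  by (auto simp: trees_def)

lemma trees_Suc_bij:
  "bij_betw (\<lambda>(a, l, r). Node l () r) (SIGMA a:{..n}. trees a \<times> trees (n - a)) (trees (Suc n))"
proof (rule bij_betwI')
  fix t assume "t \<in> trees (Suc n)"
  then obtain l r where "t = Node l () r" "size l + size r = n"
    by (cases t) (auto simp: trees_def)
  then show "\<exists>x\<in>SIGMA a:{..n}. trees a \<times> trees (n - a). t = (case x of (a, l, r) \<Rightarrow> Node l () r)"
    by (intro bexI[of _ "(size l, l, r)"]) (auto simp: trees_def)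
qed (auto simp: trees_def)

lemma finite_trees: "finite (trees n)"
proof (induction n rule: less_induct)
  case (less n)
  show ?case
  proof (cases n)
    case (Suc m)
    with less have "finite (SIGMA a:{..m}. trees a \<times> trees (m - a))"
      by (intro finite_SigmaI) auto
    with Suc show ?thesis
      using bij_betw_finite[OF trees_Suc_bij[of m]] by simp
  qed (simp add: trees_0)
qed

lemma sum_trees_Suc:
  "(\<Sum>t\<in>trees (Suc n). F t) = (\<Sum>a\<le>n. \<Sum>l\<in>trees a. \<Sum>r\<in>trees (n - a). F (Node l () r))"
proof -
  have "(\<Sum>t\<in>trees (Suc n). F t) =
      (\<Sum>x\<in>(SIGMA a:{..n}. trees a \<times> trees (n - a)). F (case x of (a, l, r) \<Rightarrow> Node l () r))"
    by (rule sum.reindex_bij_betw[OF trees_Suc_bij, symmetric])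
  also have "\<dots> = (\<Sum>a\<le>n. \<Sum>p\<in>trees a \<times> trees (n - a). F (Node (fst p) () (snd p)))"
    by (subst sum.Sigma) (auto simp: finite_trees split_def)
  also have "\<dots> = (\<Sum>a\<le>n. \<Sum>l\<in>trees a. \<Sum>r\<in>trees (n - a). F (Node l () r))"
    by (simp add: sum.cartesian_product split_def)
  finally show ?thesis .
qed

fun qhook :: "unit tree \<Rightarrow> K" where
  "qhook Leaf = 1"
| "qhook (Node l x r) = (qq ^ (size l + size r + 1) - 1) * qhook l * qhook r"

lemma qhook_nonzero: "qhook t \<noteq> 0"
  by (induction t) (simp_all del: power_Suc)

fun right_sizes :: "unit tree \<Rightarrow> nat list" where
  "right_sizes Leaf = []"
| "right_sizes (Node l x r) = right_sizes l @ right_sizes r @ [size r]"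

lemma length_right_sizes [simp]: "length (right_sizes t) = size t"
  by (induction t) auto

lemma right_sizes_eq_Nil_iff [simp]: "right_sizes t = [] \<longleftrightarrow> t = Leaf"
  by (metis eq_size_0 length_0_conv length_right_sizes)

lemma hd_right_sizes: "t \<noteq> Leaf \<Longrightarrow> hd (right_sizes t) = 0"
  by (induction t) (auto simp: hd_append)


section \<open>The S-expansion attached to a tree\<close>

text \<open>For a word c of length n, S_expansion c is the sum over compositions I of n of
  \<Prod>_{d \<in> {1..n-1} - D(I)} (q^{c_d} - 1) S^I (lemma S_expansion_comps below).\<close>

fun S_expansion :: "nat list \<Rightarrow> nsym" where
  "S_expansion xs [] = (if xs = [] then 1 else 0)"
| "S_expansion xs (k # w) = (if k = 0 \<or> k > length xs then 0
     else (\<Prod>i<k - 1. qq ^ (xs ! i) - 1) * S_expansion (drop k xs) w)"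

text \<open>A part of w that straddles the junction picks up the factor q^0 - 1 = 0.\<close>

lemma S_expansion_append:
  assumes "xs = [] \<or> last xs = 0"
  shows "S_expansion (xs @ ys) = nsym_mult (S_expansion xs) (S_expansion ys)"
proof
  fix w show "S_expansion (xs @ ys) w = nsym_mult (S_expansion xs) (S_expansion ys) w"
    using assms
  proof (induction w arbitrary: xs)
    case (Cons k w)
    show ?case
    proof (cases "xs = []")
      case True
      have "(\<lambda>u. S_expansion [] (k # u)) = (\<lambda>u. 0)" by auto
      with True show ?thesis by (simp add: nsym_mult_Cons nsym_mult_zero_left)
    next
      case xs: False
      with Cons.prems have last: "last xs = 0" by simp
      show ?thesis
      proof (cases "k = 0 \<or> k > length xs")
        case True
        have "S_expansion (xs @ ys) (k # w) = 0"
        proof (cases "k = 0 \<or> k > length (xs @ ys)")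
          case False
          with True xs have "length xs - 1 < k - 1" by (cases xs) auto
          moreover have "(xs @ ys) ! (length xs - 1) = 0"
            using xs last by (simp add: nth_append last_conv_nth)
          ultimately have "(\<Prod>i<k - 1. qq ^ ((xs @ ys) ! i) - 1) = 0"
            by (intro prod_zero bexI[of _ "length xs - 1"]) simp_all
          then show ?thesis by simp
        qed simp
        moreover have "(\<lambda>u. S_expansion xs (k # u)) = (\<lambda>u. 0)" using True by auto
        ultimately show ?thesis using xs by (simp add: nsym_mult_Cons nsym_mult_zero_left)
      next
        case False
        define c where "c = (\<Prod>i<k - 1. qq ^ (xs ! i) - 1)"
        have "(\<lambda>u. S_expansion xs (k # u)) = nsym_smult c (S_expansion (drop k xs))"
          using False by (auto simp: c_def nsym_smult_def)
        moreover have "drop k xs = [] \<or> last (drop k xs) = 0"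
          using last by (cases "k < length xs") (auto simp: last_drop)
        moreover have "(\<Prod>i<k - 1. qq ^ ((xs @ ys) ! i) - 1) = c"
          unfolding c_def using False by (intro prod.cong) (auto simp: nth_append)
        ultimately show ?thesis
          using xs False Cons.IH by (simp add: nsym_mult_Cons nsym_mult_smult_left)
      qed
    qed
  qed simp
qed

lemma S_expansion_Cons:
  "S_expansion (x # ys) w =
     nsym_mult (S 1) (S_expansion ys) w + (qq ^ x - 1) * raise_first (S_expansion ys) w"
proof (cases w)
  case (Cons k u)
  consider "k = 0" | "k = 1" | j where "k = Suc (Suc j)"
    by (metis One_nat_def not0_implies_Suc)
  then show ?thesis
    by cases (simp_all add: Cons nsym_mult_S_Cons raise_first_Cons prod.lessThan_Suc_shift
        del: prod.lessThan_Suc)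
qed simp

lemma S_expansion_Node:
  fixes l r :: "unit tree"
  defines "A \<equiv> nsym_mult (S_expansion (rev (right_sizes r))) (S_expansion (rev (right_sizes l)))"
  shows "S_expansion (rev (right_sizes (Node l x r))) w =
           nsym_mult (S 1) A w + (qq ^ size r - 1) * raise_first A w"
proof -
  have "S_expansion (rev (right_sizes (Node l x r))) w =
      S_expansion (size r # rev (right_sizes r) @ rev (right_sizes l)) w"
    by simp
  moreover have "rev (right_sizes r) = [] \<or> last (rev (right_sizes r)) = 0"
    using hd_right_sizes[of r] by (cases "r = Leaf") (simp_all add: last_rev)
  ultimately show ?thesis
    unfolding A_def by (simp only: S_expansion_append S_expansion_Cons)
qed

text \<open>The factor of the root in the q-hook product cancels against q^{|t|} - 1.\<close>

lemma qhook_S_expansion_Node: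
  fixes l r :: "unit tree"
  defines "A \<equiv> nsym_mult (S_expansion (rev (right_sizes r))) (S_expansion (rev (right_sizes l)))"
  shows "(qq ^ size (Node l x r) - 1) *
      (inverse (qhook (Node l x r)) * S_expansion (rev (right_sizes (Node l x r))) w) =
    inverse (qhook r) * inverse (qhook l) * (nsym_mult (S 1) A w + (qq ^ size r - 1) * raise_first A w)"
  unfolding S_expansion_Node A_def
  using qhook_nonzero[of l] qhook_nonzero[of r] qq_power_neq_one[of "size (Node l x r)"]
  by (simp add: field_simps del: power_Suc)

definition gtree :: "nat \<Rightarrow> nsym" where
  "gtree n = nsym_sum (trees n)
     (\<lambda>t. nsym_smult (inverse (qhook t)) (S_expansion (rev (right_sizes t))))"

lemma gtree_0: "gtree 0 = nsym_one"
proof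
  fix w show "gtree 0 w = nsym_one w"
    by (cases w) (auto simp: gtree_def trees_0)
qed

lemma gtree_mult:
  "nsym_mult (gtree b) (gtree a) = nsym_sum (trees b) (\<lambda>r. nsym_sum (trees a) (\<lambda>l.
     nsym_smult (inverse (qhook r) * inverse (qhook l))
       (nsym_mult (S_expansion (rev (right_sizes r))) (S_expansion (rev (right_sizes l))))))"
  unfolding gtree_def nsym_mult_sum_left[OF finite_trees]
  unfolding nsym_mult_sum_right[OF finite_trees]
  by (rule ext) (simp add: nsym_mult_smult_left nsym_mult_smult_right mult_ac)

lemma gtree_Suc:
  "(qq ^ Suc n - 1) * gtree (Suc n) w =
     (\<Sum>a\<le>n. nsym_mult (S 1) (nsym_mult (gtree (n - a)) (gtree a)) w
        + (qq ^ (n - a) - 1) * raise_first (nsym_mult (gtree (n - a)) (gtree a)) w)"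
proof -
  define A where "A l r =
    nsym_mult (S_expansion (rev (right_sizes r))) (S_expansion (rev (right_sizes l)))" for l r
  have node: "(qq ^ Suc n - 1) *
      (inverse (qhook (Node l () r)) * S_expansion (rev (right_sizes (Node l () r))) w) =
      inverse (qhook r) * inverse (qhook l) *
      (nsym_mult (S 1) (A l r) w + (qq ^ (n - a) - 1) * raise_first (A l r) w)"
    if "a \<le> n" "l \<in> trees a" "r \<in> trees (n - a)" for a l r
    using that qhook_S_expansion_Node[of l "()" r w] by (simp add: A_def trees_def del: power_Suc)
  have "(qq ^ Suc n - 1) * gtree (Suc n) w = (\<Sum>a\<le>n. \<Sum>l\<in>trees a. \<Sum>r\<in>trees (n - a).
      (qq ^ Suc n - 1) *
      (inverse (qhook (Node l () r)) * S_expansion (rev (right_sizes (Node l () r))) w))"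
    by (simp add: gtree_def sum_trees_Suc sum_distrib_left)
  also have "\<dots> = (\<Sum>a\<le>n. \<Sum>l\<in>trees a. \<Sum>r\<in>trees (n - a). inverse (qhook r) * inverse (qhook l) *
      (nsym_mult (S 1) (A l r) w + (qq ^ (n - a) - 1) * raise_first (A l r) w))"
    by (intro sum.cong refl node) auto
  also have "\<dots> = (\<Sum>a\<le>n. \<Sum>r\<in>trees (n - a). \<Sum>l\<in>trees a. inverse (qhook r) * inverse (qhook l) *
      (nsym_mult (S 1) (A l r) w + (qq ^ (n - a) - 1) * raise_first (A l r) w))"
    by (rule sum.cong[OF refl], rule sum.swap)
  also have "\<dots> = (\<Sum>a\<le>n. nsym_mult (S 1) (nsym_mult (gtree (n - a)) (gtree a)) w
        + (qq ^ (n - a) - 1) * raise_first (nsym_mult (gtree (n - a)) (gtree a)) w)"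
  proof -
    have "nsym_mult (S 1) (nsym_mult (gtree b) (gtree a)) w =
        (\<Sum>r\<in>trees b. \<Sum>l\<in>trees a. inverse (qhook r) * inverse (qhook l) * nsym_mult (S 1) (A l r) w)"
      "raise_first (nsym_mult (gtree b) (gtree a)) w =
        (\<Sum>r\<in>trees b. \<Sum>l\<in>trees a. inverse (qhook r) * inverse (qhook l) * raise_first (A l r) w)"
      for a b
      unfolding gtree_mult A_def
      by (simp_all add: nsym_mult_sum_right finite_trees nsym_mult_smult_right raise_first_sum
          raise_first_smult)
    then show ?thesis
      by (simp add: distrib_left sum.distrib sum_distrib_left mult_ac)
  qed
  finally show ?thesis .
qed


section \<open>The recursion\<close>

lemma finite_wcomps: "finite (wcomps k m)"
proof (rule finite_subset)
  show "wcomps k m \<subseteq> {xs. set xs \<subseteq> {..m} \<and> length xs = k}"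
    by (auto simp: wcomps_def member_le_sum_list)
qed (simp add: finite_lists_length_eq)

lemma wcomps_1: "wcomps (Suc 0) m = {[m]}"
  by (auto simp: wcomps_def length_Suc_conv)

lemma wcomps_Suc_bij:
  "bij_betw (\<lambda>(a, js). js @ [a]) (SIGMA a:{..m}. wcomps k (m - a)) (wcomps (Suc k) m)"
proof (rule bij_betwI')
  fix js assume js: "js \<in> wcomps (Suc k) m"
  then have "js \<noteq> []"
    by (auto simp: wcomps_def)
  then have "js = butlast js @ [last js]"
    by simp
  moreover from this have "sum_list js = sum_list (butlast js) + last js"
    by (metis sum_list_append sum_list_simps add_0_right)
  ultimately show "\<exists>x\<in>SIGMA a:{..m}. wcomps k (m - a). js = (case x of (a, js) \<Rightarrow> js @ [a])"
    using js by (intro bexI[of _ "(last js, butlast js)"]) (auto simp: wcomps_def)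
qed (auto simp: wcomps_def)

lemma sum_wcomps_Suc:
  "(\<Sum>js\<in>wcomps (Suc k) m. F js) = (\<Sum>a\<le>m. \<Sum>js\<in>wcomps k (m - a). F (js @ [a]))"
proof -
  have "(\<Sum>js\<in>wcomps (Suc k) m. F js) =
      (\<Sum>x\<in>(SIGMA a:{..m}. wcomps k (m - a)). F (case x of (a, js) \<Rightarrow> js @ [a]))"
    by (rule sum.reindex_bij_betw[OF wcomps_Suc_bij, symmetric])
  also have "\<dots> = (\<Sum>a\<le>m. \<Sum>js\<in>wcomps k (m - a). F (js @ [a]))"
    by (subst sum.Sigma) (auto simp: finite_wcomps split_def)
  finally show ?thesis .
qed

text \<open>coeff_pow f k m is the coefficient of x^m in (\<Sum>_j f_j x^j)^k.\<close>

definition coeff_pow :: "(nat \<Rightarrow> nsym) \<Rightarrow> nat \<Rightarrow> nat \<Rightarrow> nsym" where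
  "coeff_pow f k m = nsym_sum (wcomps k m) (\<lambda>js. nsym_prod (map f js))"

definition rec_rhs :: "(nat \<Rightarrow> nsym) \<Rightarrow> nat \<Rightarrow> nsym" where
  "rec_rhs f n = nsym_sum {1..n} (\<lambda>k. nsym_mult (S k) (coeff_pow f (k + 1) (n - k)))"

lemma coeff_pow_1: "coeff_pow f (Suc 0) m = f m"
  by (rule ext) (simp add: coeff_pow_def wcomps_1 nsym_prod_def nsym_mult_one_right)

lemma coeff_pow_Suc:
  "coeff_pow f (Suc k) m = nsym_sum {..m} (\<lambda>a. nsym_mult (coeff_pow f k (m - a)) (f a))"
proof
  have "nsym_prod [x] = x" for x
    by (simp add: nsym_prod_def nsym_mult_one_right)
  then show "coeff_pow f (Suc k) m w =
      nsym_sum {..m} (\<lambda>a. nsym_mult (coeff_pow f k (m - a)) (f a)) w" for w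
    by (simp add: coeff_pow_def sum_wcomps_Suc nsym_mult_sum_left finite_wcomps nsym_prod_append)
qed

lemma sum_triangle_swap:
  fixes m :: nat
  shows "(\<Sum>k=1..m. \<Sum>a\<le>m - k. G a k) = (\<Sum>a\<le>m. \<Sum>k=1..m - a. (G a k :: 'a :: comm_monoid_add))"
proof -
  have "(\<Sum>k=1..m. \<Sum>a\<le>m - k. G a k) = (\<Sum>k\<in>{1..m}. \<Sum>a\<in>{a \<in> {..m}. k \<le> m - a}. G a k)"
    by (intro sum.cong refl) auto
  also have "\<dots> = (\<Sum>a\<le>m. \<Sum>k\<in>{k \<in> {1..m}. k \<le> m - a}. G a k)"
    by (rule sum.swap_restrict[symmetric]) auto
  also have "\<dots> = (\<Sum>a\<le>m. \<Sum>k=1..m - a. G a k)"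
    by (intro sum.cong refl) auto
  finally show ?thesis .
qed

lemma rec_rhs_Nil: "rec_rhs f n [] = 0"
  by (simp add: rec_rhs_def)

lemma raise_first_rec_rhs_mult:
  "raise_first (nsym_mult (rec_rhs f b) h) =
     nsym_sum {1..b} (\<lambda>k. nsym_mult (S (Suc k)) (nsym_mult (coeff_pow f (k + 1) (b - k)) h))"
proof -
  have "raise_first (nsym_mult (S k) (nsym_mult (coeff_pow f (k + 1) (b - k)) h)) =
      nsym_mult (S (Suc k)) (nsym_mult (coeff_pow f (k + 1) (b - k)) h)" if "k \<in> {1..b}" for k
    using that by (simp add: raise_first_S_mult)
  then show ?thesis
    unfolding raise_first_mult[of "rec_rhs f b", OF rec_rhs_Nil] rec_rhs_def
      nsym_mult_sum_left[OF finite_atLeastAtMost] raise_first_sum nsym_mult_assoc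
    by (auto simp: nsym_sum_def intro!: sum.cong)
qed

text \<open>Split off the last factor f_a of each product: the first sum is the S_1-part of the
  right-hand side, the second one collects the S_{k+1}-parts for k \<ge> 1.\<close>

lemma rec_rhs_Suc:
  "rec_rhs f (Suc m) w =
     (\<Sum>a\<le>m. nsym_mult (S 1) (nsym_mult (f (m - a)) (f a)) w
        + raise_first (nsym_mult (rec_rhs f (m - a)) (f a)) w)"
proof -
  define P where "P k = nsym_mult (S (Suc k)) (coeff_pow f (Suc (Suc k)) (m - k)) w" for k
  have P_split: "P k =
      (\<Sum>a\<le>m - k. nsym_mult (S (Suc k)) (nsym_mult (coeff_pow f (Suc k) (m - k - a)) (f a)) w)" for k
    unfolding P_def coeff_pow_Suc[of f "Suc k"] nsym_mult_sum_right[OF finite_atMost] nsym_sum_apply ..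
  have "rec_rhs f (Suc m) w = (\<Sum>k=0..m. P k)"
    by (simp add: rec_rhs_def P_def sum.shift_bounds_cl_Suc_ivl del: sum.cl_ivl_Suc)
  also have "\<dots> = P 0 + (\<Sum>k=1..m. P k)"
    by (simp add: sum.atLeast_Suc_atMost)
  also have "P 0 = (\<Sum>a\<le>m. nsym_mult (S 1) (nsym_mult (f (m - a)) (f a)) w)"
    by (simp add: P_split coeff_pow_1)
  also have "(\<Sum>k=1..m. P k) =
      (\<Sum>k=1..m. \<Sum>a\<le>m - k. nsym_mult (S (Suc k)) (nsym_mult (coeff_pow f (Suc k) (m - k - a)) (f a)) w)"
    by (simp add: P_split)
  also have "\<dots> =
      (\<Sum>a\<le>m. \<Sum>k=1..m - a. nsym_mult (S (Suc k)) (nsym_mult (coeff_pow f (Suc k) (m - k - a)) (f a)) w)"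
    by (rule sum_triangle_swap)
  also have "\<dots> = (\<Sum>a\<le>m. raise_first (nsym_mult (rec_rhs f (m - a)) (f a)) w)"
    by (simp add: raise_first_rec_rhs_mult add.commute)
  finally show ?thesis
    by (simp add: sum.distrib)
qed

lemma rec_rhs_cong:
  assumes "\<And>j. j < n \<Longrightarrow> f j = h j"
  shows "rec_rhs f n = rec_rhs h n"
proof -
  have "coeff_pow f (k + 1) (n - k) = coeff_pow h (k + 1) (n - k)" if "k \<in> {1..n}" for k
  proof -
    have maps: "map f js = map h js" if "js \<in> wcomps (k + 1) (n - k)" for js
      using that \<open>k \<in> {1..n}\<close> assms member_le_sum_list[of _ js]
      by (intro map_cong) (fastforce simp: wcomps_def)+
    show ?thesis
      unfolding coeff_pow_def nsym_sum_def by (intro ext sum.cong refl) (metis maps)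
  qed
  then show ?thesis
    by (auto simp: rec_rhs_def nsym_sum_def intro!: sum.cong)
qed

lemma rec_rhs_unique:
  assumes "f 0 = h 0"
    and "\<And>m. m \<ge> 1 \<Longrightarrow> nsym_smult (qq ^ m - 1) (f m) = rec_rhs f m"
    and "\<And>m. m \<ge> 1 \<Longrightarrow> nsym_smult (qq ^ m - 1) (h m) = rec_rhs h m"
  shows "f n = h n"
proof (induction n rule: less_induct)
  case (less n)
  show ?case
  proof (cases "n = 0")
    case False
    then have "nsym_smult (qq ^ n - 1) (f n) = nsym_smult (qq ^ n - 1) (h n)"
      using assms(2,3)[of n] rec_rhs_cong[of n f h] less.IH by simp
    with False show ?thesis
      by (simp add: nsym_smult_def fun_eq_iff)
  qed (use assms(1) in simp)
qed

lemma gtree_rec: "nsym_smult (qq ^ n - 1) (gtree n) = rec_rhs gtree n"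
proof (induction n rule: less_induct)
  case (less n)
  show ?case
  proof (cases n)
    case 0
    then show ?thesis by (auto simp: rec_rhs_def)
  next
    case (Suc m)
    have raise: "raise_first (nsym_mult (rec_rhs gtree (m - a)) (gtree a)) w =
        (qq ^ (m - a) - 1) * raise_first (nsym_mult (gtree (m - a)) (gtree a)) w" for a w
    proof -
      have IH: "rec_rhs gtree (m - a) = nsym_smult (qq ^ (m - a) - 1) (gtree (m - a))"
        using less.IH[of "m - a"] Suc by (simp only: less_Suc_eq_le diff_le_self simp_thms)
      show ?thesis
        unfolding IH nsym_mult_smult_left raise_first_smult nsym_smult_apply ..
    qed
    show ?thesis
      by (rule ext) (simp only: Suc nsym_smult_apply gtree_Suc rec_rhs_Suc raise)
  qed
qed


lemma invs_Nil [simp]: "invs [] = 0"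
  by (simp add: invs_def)

lemma invs_Cons: "invs (x # w) = length (filter (\<lambda>y. y < x) w) + invs w"
proof -
  let ?A = "(\<lambda>j. (0, Suc j)) ` {j. j < length w \<and> w ! j < x}"
  let ?B = "(\<lambda>(i, j). (Suc i, Suc j)) ` {(i, j). i < j \<and> j < length w \<and> w ! j < w ! i}"
  have split: "{(i, j). i < j \<and> j < length (x # w) \<and> (x # w) ! j < (x # w) ! i} = ?A \<union> ?B"
  proof (rule set_eqI, clarify)
    fix i j
    show "(i, j) \<in> {(i, j). i < j \<and> j < length (x # w) \<and> (x # w) ! j < (x # w) ! i} \<longleftrightarrow>
        (i, j) \<in> ?A \<union> ?B"
      by (cases i; cases j) auto
  qed
  have "finite ?B"
    by (rule finite_imageI, rule finite_subset[of _ "{..<length w} \<times> {..<length w}"]) auto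
  moreover have "card ?A = length (filter (\<lambda>y. y < x) w)"
    by (subst card_image) (auto simp: inj_on_def length_filter_conv_card)
  moreover have "card ?B = invs w"
    by (subst card_image) (auto simp: inj_on_def invs_def)
  ultimately show ?thesis
    unfolding invs_def[of "x # w"] split by (subst card_Un_disjoint) auto
qed

fun crossings :: "nat list \<Rightarrow> nat list \<Rightarrow> nat" where
  "crossings [] v = 0"
| "crossings (x # u) v = length (filter (\<lambda>y. y < x) v) + crossings u v"

lemma invs_append: "invs (u @ v) = invs u + invs v + crossings u v"
  by (induction u) (simp_all add: invs_Cons)

lemma crossings_Cons_greater: "\<forall>x\<in>set u. x < m \<Longrightarrow> crossings u (m # v) = crossings u v"
  by (induction u) auto

lemma invs_split_max:
  assumes "\<forall>x\<in>set u. x < m" "\<forall>x\<in>set v. x < m"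
  shows "invs (u @ m # v) = invs u + invs v + length v + crossings u v"
proof -
  have "filter (\<lambda>y. y < m) v = v"
    using assms(2) by (simp add: filter_id_conv)
  with assms(1) show ?thesis
    by (simp add: invs_append invs_Cons crossings_Cons_greater)
qed

definition set_crossings :: "nat set \<Rightarrow> nat set \<Rightarrow> nat" where
  "set_crossings A B = card {(x, y). x \<in> A \<and> y \<in> B \<and> y < x}"

lemma finite_crossing_pairs:
  "finite A \<Longrightarrow> finite B \<Longrightarrow> finite {(x, y). x \<in> A \<and> y \<in> B \<and> y < x}"
  by (rule finite_subset[of _ "A \<times> B"]) auto

lemma set_crossings_empty [simp]: "set_crossings {} B = 0" "set_crossings A {} = 0"
  by (simp_all add: set_crossings_def)

lemma set_crossings_insert:
  assumes "finite A" "finite B" "x \<notin> A"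
  shows "set_crossings (insert x A) B = card {y \<in> B. y < x} + set_crossings A B"
proof -
  have "{(z, y). z \<in> insert x A \<and> y \<in> B \<and> y < z} =
      (\<lambda>y. (x, y)) ` {y \<in> B. y < x} \<union> {(z, y). z \<in> A \<and> y \<in> B \<and> y < z}"
    by auto
  with assms show ?thesis
    unfolding set_crossings_def \<open>{(z, y). z \<in> insert x A \<and> y \<in> B \<and> y < z} = _\<close>
    by (subst card_Un_disjoint) (auto simp: finite_crossing_pairs card_image inj_on_def)
qed

lemma crossings_eq_set_crossings:
  "distinct u \<Longrightarrow> distinct v \<Longrightarrow> crossings u v = set_crossings (set u) (set v)"
proof (induction u)
  case (Cons x u)
  have "length (filter (\<lambda>y. y < x) v) = card {y \<in> set v. y < x}"
    using Cons.prems by (simp add: distinct_length_filter Int_def conj_commute)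
  with Cons show ?case
    by (simp add: set_crossings_insert)
qed simp

lemma set_crossings_eq_0_iff:
  "finite A \<Longrightarrow> finite B \<Longrightarrow> set_crossings A B = 0 \<longleftrightarrow> (\<forall>x\<in>A. \<forall>y\<in>B. x \<le> y)"
  by (auto simp: set_crossings_def finite_crossing_pairs not_less)


section \<open>Gaussian coefficients\<close>

definition qbinomial :: "nat set \<Rightarrow> nat \<Rightarrow> K" where
  "qbinomial Y a = (\<Sum>A\<in>{A. A \<subseteq> Y \<and> card A = a}. qq ^ set_crossings A (Y - A))"

lemma qbinomial_0: "finite Y \<Longrightarrow> qbinomial Y 0 = 1"
proof -
  assume "finite Y"
  then have "{A. A \<subseteq> Y \<and> card A = 0} = {{}}"
    by (auto dest: finite_subset)
  then show ?thesis by (simp add: qbinomial_def)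
qed

lemma qbinomial_card: "finite Y \<Longrightarrow> qbinomial Y (card Y) = 1"
proof -
  assume "finite Y"
  then have "{A. A \<subseteq> Y \<and> card A = card Y} = {Y}"
    by (auto dest: card_subset_eq)
  then show ?thesis by (simp add: qbinomial_def)
qed

lemma subsets_card_remove:
  assumes "finite Y" "y \<in> Y" "0 < a"
  shows "{A. A \<subseteq> Y \<and> card A = a} =
    insert y ` {B. B \<subseteq> Y - {y} \<and> card B = a - 1} \<union> {A. A \<subseteq> Y - {y} \<and> card A = a}"
proof (intro set_eqI iffI)
  fix A assume A: "A \<in> {A. A \<subseteq> Y \<and> card A = a}"
  show "A \<in> insert y ` {B. B \<subseteq> Y - {y} \<and> card B = a - 1} \<union> {A. A \<subseteq> Y - {y} \<and> card A = a}"
  proof (cases "y \<in> A")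
    case True
    with A assms(1) have "A - {y} \<in> {B. B \<subseteq> Y - {y} \<and> card B = a - 1}" "A = insert y (A - {y})"
      by (auto dest: finite_subset)
    then show ?thesis by blast
  qed (use A in auto)
next
  fix A assume "A \<in> insert y ` {B. B \<subseteq> Y - {y} \<and> card B = a - 1} \<union> {A. A \<subseteq> Y - {y} \<and> card A = a}"
  then show "A \<in> {A. A \<subseteq> Y \<and> card A = a}"
  proof
    assume "A \<in> insert y ` {B. B \<subseteq> Y - {y} \<and> card B = a - 1}"
    then obtain B where "B \<subseteq> Y - {y}" "card B = a - 1" "A = insert y B" by auto
    moreover from this have "finite B" "y \<notin> B" using assms(1) finite_subset by blast+
    ultimately show ?thesis using assms by auto
  qed auto
qed

lemma qbinomial_remove_max:
  assumes Y: "finite Y" "y \<in> Y" "\<forall>z\<in>Y. z \<le> y" and a: "0 < a" "a < card Y"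
  shows "qbinomial Y a = qq ^ (card Y - a) * qbinomial (Y - {y}) (a - 1) + qbinomial (Y - {y}) a"
proof -
  let ?Y' = "Y - {y}"
  let ?S1 = "{B. B \<subseteq> ?Y' \<and> card B = a - 1}"
  let ?S2 = "{A. A \<subseteq> ?Y' \<and> card A = a}"
  have fin: "finite ?S1" "finite ?S2"
    using Y by (auto intro: finite_subset[of _ "Pow ?Y'"])
  have inj: "inj_on (insert y) ?S1"
    by (rule inj_onI) (metis Diff_insert_absorb mem_Collect_eq subset_Diff_insert)
  have with_y: "set_crossings (insert y B) (Y - insert y B) = card Y - a + set_crossings B (?Y' - B)"
    if B: "B \<in> ?S1" for B
  proof -
    have "finite B" "y \<notin> B" using B Y by (auto dest: finite_subset)
    moreover have "{z \<in> ?Y' - B. z < y} = ?Y' - B" using Y by force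
    moreover have "card (?Y' - B) = card Y - a"
      using B Y a \<open>finite B\<close> by (simp add: card_Diff_subset)
    moreover have "Y - insert y B = ?Y' - B" by auto
    ultimately show ?thesis
      using Y by (simp add: set_crossings_insert)
  qed
  have without_y: "set_crossings A (Y - A) = set_crossings A (?Y' - A)" if "A \<in> ?S2" for A
  proof -
    have "{(x, z). x \<in> A \<and> z \<in> Y - A \<and> z < x} = {(x, z). x \<in> A \<and> z \<in> ?Y' - A \<and> z < x}"
      using that Y by fastforce
    then show ?thesis by (simp add: set_crossings_def)
  qed
  have reindex: "(\<Sum>A\<in>insert y ` ?S1. qq ^ set_crossings A (Y - A)) =
      (\<Sum>B\<in>?S1. qq ^ set_crossings (insert y B) (Y - insert y B))"
    by (rule sum.reindex_cong[OF inj refl]) simp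
  have "qbinomial Y a = (\<Sum>B\<in>?S1. qq ^ set_crossings (insert y B) (Y - insert y B)) +
      (\<Sum>A\<in>?S2. qq ^ set_crossings A (Y - A))"
    unfolding qbinomial_def subsets_card_remove[OF Y(1,2) a(1)] reindex[symmetric]
    by (rule sum.union_disjoint) (use fin in auto)
  also have "\<dots> = (\<Sum>B\<in>?S1. qq ^ (card Y - a) * qq ^ set_crossings B (?Y' - B)) +
      (\<Sum>A\<in>?S2. qq ^ set_crossings A (?Y' - A))"
    by (intro arg_cong2[where f = "(+)"] sum.cong refl) (simp_all only: with_y without_y power_add)
  also have "\<dots> = qq ^ (card Y - a) * qbinomial ?Y' (a - 1) + qbinomial ?Y' a"
    by (simp add: qbinomial_def sum_distrib_left)
  finally show ?thesis .
qed

lemma qbinomial_qpoch: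
  "finite Y \<Longrightarrow> a \<le> card Y \<Longrightarrow> qbinomial Y a * qpoch a * qpoch (card Y - a) = qpoch (card Y)"
proof (induction "card Y" arbitrary: Y a)
  case 0
  then show ?case by (simp add: qbinomial_0 qpoch_0)
next
  case (Suc n)
  show ?case
  proof (cases "a = 0 \<or> a = card Y")
    case False
    then obtain a' where a': "a = Suc a'"
      by (cases a) auto
    from False Suc.prems(2) have "a < card Y" by simp
    with a' Suc.hyps(2) obtain d where d: "n = a' + Suc d"
      by (metis add_Suc_right less_Suc_eq_le less_imp_Suc_add Suc_less_eq)
    define y where "y = Max Y"
    have "Y \<noteq> {}" using Suc.hyps(2) by auto
    with Suc.prems(1) have y: "y \<in> Y" "\<forall>z\<in>Y. z \<le> y"
      by (auto simp: y_def)
    with Suc.hyps(2) have card_Y': "card (Y - {y}) = n"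
      by simp
    have card_diff: "card Y - a = Suc d" using Suc.hyps(2) a' d by simp
    have IH1: "qbinomial (Y - {y}) a' * qpoch a' * qpoch (Suc d) = qpoch n"
      using Suc.hyps(1)[of "Y - {y}" a'] card_Y' Suc.prems a' d by simp
    have IH2: "qbinomial (Y - {y}) a * qpoch a * qpoch d = qpoch n"
      using Suc.hyps(1)[of "Y - {y}" a] card_Y' Suc.prems a' d by simp
    have "qbinomial Y a = qq ^ Suc d * qbinomial (Y - {y}) a' + qbinomial (Y - {y}) a"
      using qbinomial_remove_max[OF Suc.prems(1) y, of a] a' card_diff Suc.hyps(2) by simp
    then have "qbinomial Y a * qpoch a * qpoch (card Y - a) =
        qq ^ Suc d * (qq ^ Suc a' - 1) * (qbinomial (Y - {y}) a' * qpoch a' * qpoch (Suc d))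
        + (qq ^ Suc d - 1) * (qbinomial (Y - {y}) a * qpoch a * qpoch d)"
      unfolding card_diff unfolding a' by (simp add: qpoch_Suc algebra_simps del: power_Suc)
    also have "\<dots> = qpoch n * (qq ^ (Suc d + Suc a') - 1)"
      unfolding IH1 IH2 power_add by (simp add: algebra_simps del: power_Suc)
    also have "\<dots> = qpoch (card Y)"
    proof -
      have "Suc d + Suc a' = Suc n" using d by simp
      then show ?thesis
        unfolding Suc.hyps(2)[symmetric] qpoch_Suc by simp
    qed
    finally show ?thesis .
  qed (use Suc in \<open>auto simp: qbinomial_0 qbinomial_card qpoch_0\<close>)
qed


section \<open>Decreasing trees\<close>

lemma dtree_append_max:
  assumes "distinct (u @ m # v)" "\<forall>x\<in>set u. x < m" "\<forall>x\<in>set v. x < m"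
  shows "dtree (u @ m # v) = Node (dtree u) m (dtree v)"
proof -
  obtain y ys where split: "u @ m # v = y # ys" by (cases u) auto
  have "Max (set (u @ m # v)) = m"
    using assms by (intro Max_eqI) auto
  moreover have "m \<notin> set u" using assms by auto
  then have "takeWhile (\<lambda>y. y \<noteq> m) (u @ m # v) = u" "tl (dropWhile (\<lambda>y. y \<noteq> m) (u @ m # v)) = v"
    by (induction u) auto
  ultimately show ?thesis
    unfolding split by (simp add: Let_def)
qed

lemma split_at_Max:
  assumes "distinct w" "w \<noteq> []"
  obtains u v where "w = u @ Max (set w) # v" "\<forall>x\<in>set u. x < Max (set w)" "\<forall>x\<in>set v. x < Max (set w)"
proof -
  from assms obtain u v where w: "w = u @ Max (set w) # v"
    by (meson List.finite_set Max_in set_empty split_list)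
  with assms(1) have "distinct (u @ Max (set w) # v)"
    by metis
  then have "Max (set w) \<notin> set u \<union> set v"
    by auto
  moreover have "set u \<union> set v \<subseteq> set w"
    by (subst w) auto
  then have "x \<le> Max (set w)" if "x \<in> set u \<union> set v" for x
    using that by auto
  ultimately have "\<forall>x\<in>set u \<union> set v. x < Max (set w)"
    using order_le_neq_trans by blast
  with w that show ?thesis by simp
qed

lemma dtree_split_at_Max:
  assumes "distinct w" "w \<noteq> []"
  obtains u v where "w = u @ Max (set w) # v" "\<forall>x\<in>set u. x < Max (set w)" "\<forall>x\<in>set v. x < Max (set w)"
    "dtree w = Node (dtree u) (Max (set w)) (dtree v)" "distinct u" "distinct v"
proof -
  obtain u v where "w = u @ Max (set w) # v" "\<forall>x\<in>set u. x < Max (set w)" "\<forall>x\<in>set v. x < Max (set w)"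
    using split_at_Max[OF assms] .
  with assms(1) show ?thesis
    using that dtree_append_max by (metis distinct_append distinct.simps(2))
qed

lemma size_dtree: "distinct w \<Longrightarrow> size (dtree w) = length w"
proof (induction "length w" arbitrary: w rule: less_induct)
  case less
  show ?case
  proof (cases "w = []")
    case False
    with less.prems obtain u v where w: "w = u @ Max (set w) # v"
      "dtree w = Node (dtree u) (Max (set w)) (dtree v)" "distinct u" "distinct v"
      by (rule dtree_split_at_Max)
    moreover have "length w = Suc (length u + length v)"
      using arg_cong[OF w(1), of length] by simp
    ultimately show ?thesis
      using less.hyps[of u] less.hyps[of v] by simp
  qed simp
qed

lemma shape_Leaf [simp]: "shape Leaf = Leaf"
  and shape_Node [simp]: "shape (Node l m r) = Node (shape l) () (shape r)"
  and size_shape [simp]: "size (shape t) = size t"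
  by (simp_all add: shape_def)

fun tree_invs :: "unit tree \<Rightarrow> nat" where
  "tree_invs Leaf = 0"
| "tree_invs (Node l x r) = tree_invs l + tree_invs r + size r"

lemma tree_invs_le_invs: "distinct w \<Longrightarrow> tree_invs (shape (dtree w)) \<le> invs w"
proof (induction "length w" arbitrary: w rule: less_induct)
  case less
  show ?case
  proof (cases "w = []")
    case False
    with less.prems obtain u v where w: "w = u @ Max (set w) # v"
      "\<forall>x\<in>set u. x < Max (set w)" "\<forall>x\<in>set v. x < Max (set w)"
      "dtree w = Node (dtree u) (Max (set w)) (dtree v)" "distinct u" "distinct v"
      by (rule dtree_split_at_Max)
    have "invs w = invs u + invs v + length v + crossings u v"
      using w(1-3) invs_split_max by metis
    moreover have "length w = Suc (length u + length v)"
      using arg_cong[OF w(1), of length] by simp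
    ultimately show ?thesis
      using less.hyps[of u] less.hyps[of v] w by (simp add: size_dtree)
  qed simp
qed

lemma lower_part_unique:
  fixes A B A' B' :: "'a::linorder set"
  assumes "A \<union> B = A' \<union> B'" "finite A" "finite A'" "card A = card A'"
    and "\<forall>x\<in>A. \<forall>y\<in>B. x \<le> y" "\<forall>x\<in>A'. \<forall>y\<in>B'. x \<le> y"
  shows "A = A'"
proof (rule ccontr)
  assume "A \<noteq> A'"
  with assms(2-4) obtain x y where "x \<in> A - A'" "y \<in> A' - A"
    by (metis Diff_eq_empty_iff card_subset_eq equals0I)
  with assms(1,5,6) have "x \<le> y" "y \<le> x"
    by blast+
  with \<open>x \<in> A - A'\<close> \<open>y \<in> A' - A\<close> show False
    by simp
qed

lemma minimal_word_split:
  assumes "distinct w" "w \<noteq> []" "invs w = tree_invs (shape (dtree w))"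
  obtains u v where "w = u @ Max (set w) # v" "dtree w = Node (dtree u) (Max (set w)) (dtree v)"
    "distinct u" "distinct v" "Max (set w) \<notin> set u" "Max (set w) \<notin> set v" "set u \<inter> set v = {}"
    "invs u = tree_invs (shape (dtree u))" "invs v = tree_invs (shape (dtree v))"
    "\<forall>x\<in>set u. \<forall>y\<in>set v. x \<le> y"
proof -
  obtain u v where w: "w = u @ Max (set w) # v"
    "\<forall>x\<in>set u. x < Max (set w)" "\<forall>x\<in>set v. x < Max (set w)"
    "dtree w = Node (dtree u) (Max (set w)) (dtree v)" "distinct u" "distinct v"
    using dtree_split_at_Max[OF assms(1,2)] .
  have "invs w = invs u + invs v + length v + crossings u v"
    using w(1-3) invs_split_max by metis
  with assms(3) w tree_invs_le_invs[of u] tree_invs_le_invs[of v]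
  have minimal: "invs u = tree_invs (shape (dtree u))" "invs v = tree_invs (shape (dtree v))"
    and "crossings u v = 0"
    by (simp_all add: size_dtree)
  with w have ordered: "\<forall>x\<in>set u. \<forall>y\<in>set v. x \<le> y"
    by (simp add: crossings_eq_set_crossings set_crossings_eq_0_iff)
  have "distinct (u @ Max (set w) # v)"
    using assms(1) w(1) by metis
  then have "Max (set w) \<notin> set u" "Max (set w) \<notin> set v" "set u \<inter> set v = {}"
    by auto
  from that[OF w(1,4,5,6) this minimal ordered] show ?thesis .
qed

lemma minimal_word_unique:
  assumes "distinct w1" "distinct w2" "set w1 = set w2" "shape (dtree w1) = shape (dtree w2)"
    and "invs w1 = tree_invs (shape (dtree w1))" "invs w2 = tree_invs (shape (dtree w2))"
  shows "w1 = w2"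
  using assms
proof (induction "length w1" arbitrary: w1 w2 rule: less_induct)
  case less
  show ?case
  proof (cases "w1 = []")
    case False
    with less.prems(3) have "w2 \<noteq> []" by auto
    obtain u1 v1 where w1: "w1 = u1 @ Max (set w1) # v1"
      "dtree w1 = Node (dtree u1) (Max (set w1)) (dtree v1)" "distinct u1" "distinct v1"
      "Max (set w1) \<notin> set u1" "Max (set w1) \<notin> set v1" "set u1 \<inter> set v1 = {}"
      "invs u1 = tree_invs (shape (dtree u1))" "invs v1 = tree_invs (shape (dtree v1))"
      "\<forall>x\<in>set u1. \<forall>y\<in>set v1. x \<le> y"
      using minimal_word_split[OF less.prems(1) False less.prems(5)] .
    obtain u2 v2 where w2: "w2 = u2 @ Max (set w2) # v2"
      "dtree w2 = Node (dtree u2) (Max (set w2)) (dtree v2)" "distinct u2" "distinct v2"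
      "Max (set w2) \<notin> set u2" "Max (set w2) \<notin> set v2" "set u2 \<inter> set v2 = {}"
      "invs u2 = tree_invs (shape (dtree u2))" "invs v2 = tree_invs (shape (dtree v2))"
      "\<forall>x\<in>set u2. \<forall>y\<in>set v2. x \<le> y"
      using minimal_word_split[OF less.prems(2) \<open>w2 \<noteq> []\<close> less.prems(6)] .
    have shapes: "shape (dtree u1) = shape (dtree u2)" "shape (dtree v1) = shape (dtree v2)"
      using less.prems(3,4) w1(2) w2(2) by simp_all
    have "set w1 = insert (Max (set w1)) (set u1 \<union> set v1)"
      "set w2 = insert (Max (set w2)) (set u2 \<union> set v2)"
      using arg_cong[OF w1(1), of set] arg_cong[OF w2(1), of set] by simp_all
    with less.prems(3) w1(5,6) w2(5,6) have "set u1 \<union> set v1 = set u2 \<union> set v2"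
      by (metis Diff_insert_absorb Un_iff)
    moreover have "card (set u1) = card (set u2)"
      using arg_cong[OF shapes(1), of size] w1(3) w2(3) by (simp add: size_dtree distinct_card)
    ultimately have sets: "set u1 = set u2" "set v1 = set v2"
      using lower_part_unique[of "set u1" "set v1" "set u2" "set v2"] w1(7,10) w2(7,10)
      by (auto simp: Un_commute)
    have "length u1 < length w1" "length v1 < length w1"
      using arg_cong[OF w1(1), of length] by simp_all
    then have "u1 = u2" "v1 = v2"
      using less.hyps[of u1 u2] less.hyps[of v1 v2] w1 w2 sets shapes by simp_all
    then show ?thesis
      using w1(1) w2(1) less.prems(3) by simp
  qed (use less.prems(3) in simp)
qed

definition words_of_shape :: "nat set \<Rightarrow> unit tree \<Rightarrow> nat list set" where
  "words_of_shape X t = {w. distinct w \<and> set w = X \<and> shape (dtree w) = t}"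

lemma finite_words_of_shape: "finite X \<Longrightarrow> finite (words_of_shape X t)"
  by (rule finite_subset[of _ "{w. set w \<subseteq> X \<and> length w = card X}"])
    (auto simp: words_of_shape_def distinct_card[symmetric] finite_lists_length_eq)

lemma words_of_shape_Leaf: "words_of_shape {} Leaf = {[]}"
  by (auto simp: words_of_shape_def)

lemma words_of_shape_Node_bij:
  assumes "finite X" "X \<noteq> {}"
  defines "m \<equiv> Max X"
  shows "bij_betw (\<lambda>(A, u, v). u @ m # v)
     (SIGMA A:{A. A \<subseteq> X - {m} \<and> card A = size l}. words_of_shape A l \<times> words_of_shape (X - {m} - A) r)
     (words_of_shape X (Node l () r))"
proof (rule bij_betwI')
  fix x y
  assume "x \<in> (SIGMA A:{A. A \<subseteq> X - {m} \<and> card A = size l}. words_of_shape A l \<times> words_of_shape (X - {m} - A) r)"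
    and "y \<in> (SIGMA A:{A. A \<subseteq> X - {m} \<and> card A = size l}. words_of_shape A l \<times> words_of_shape (X - {m} - A) r)"
  moreover obtain A u v A' u' v' where "x = (A, u, v)" "y = (A', u', v')"
    by (cases x, cases y) auto
  ultimately have "x = (set u, u, v)" "m \<notin> set u" "m \<notin> set v" "y = (set u', u', v')"
    by (auto simp: words_of_shape_def)
  then show "((case x of (A, u, v) \<Rightarrow> u @ m # v) = (case y of (A, u, v) \<Rightarrow> u @ m # v)) = (x = y)"
    by (auto simp: append_Cons_eq_iff)
next
  have below: "z < m" if "z \<in> X - {m}" for z
    using that assms by (simp add: order.not_eq_order_implies_strict)
  fix x
  assume "x \<in> (SIGMA A:{A. A \<subseteq> X - {m} \<and> card A = size l}. words_of_shape A l \<times> words_of_shape (X - {m} - A) r)"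
  then obtain A u v where x: "x = (A, u, v)" "A \<subseteq> X - {m}"
    and u: "distinct u" "set u = A" "shape (dtree u) = l"
    and v: "distinct v" "set v = X - {m} - A" "shape (dtree v) = r"
    by (auto simp: words_of_shape_def)
  then have "distinct (u @ m # v)" "\<forall>x\<in>set u. x < m" "\<forall>x\<in>set v. x < m"
    using below by auto
  moreover have "m \<in> X"
    using assms by (simp add: m_def)
  then have "set (u @ m # v) = X"
    using x u v by auto
  ultimately show "(case x of (A, u, v) \<Rightarrow> u @ m # v) \<in> words_of_shape X (Node l () r)"
    using x u v dtree_append_max by (simp add: words_of_shape_def)
next
  fix w assume "w \<in> words_of_shape X (Node l () r)"
  then have w: "distinct w" "set w = X" "shape (dtree w) = Node l () r"
    by (auto simp: words_of_shape_def)
  have "w \<noteq> []" "Max (set w) = m"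
    using w by (auto simp: m_def)
  obtain u v where uv: "w = u @ m # v" "\<forall>x\<in>set u. x < m" "\<forall>x\<in>set v. x < m"
      "dtree w = Node (dtree u) m (dtree v)" "distinct u" "distinct v"
    by (rule dtree_split_at_Max[OF w(1) \<open>w \<noteq> []\<close>, unfolded \<open>Max (set w) = m\<close>])
  with w have "shape (dtree u) = l" "shape (dtree v) = r"
    by simp_all
  moreover from this have "card (set u) = size l"
    using uv(5) by (auto simp: distinct_card size_dtree)
  moreover have "set u \<subseteq> X - {m}" "set v = X - {m} - set u"
    using w(1,2) uv(1) by auto
  ultimately show "\<exists>x\<in>(SIGMA A:{A. A \<subseteq> X - {m} \<and> card A = size l}.
      words_of_shape A l \<times> words_of_shape (X - {m} - A) r). w = (case x of (A, u, v) \<Rightarrow> u @ m # v)"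
    using uv by (intro bexI[of _ "(set u, u, v)"]) (auto simp: words_of_shape_def)
qed

lemma sum_words_of_shape_Node:
  assumes "finite X" "X \<noteq> {}"
  defines "Y \<equiv> X - {Max X}"
  shows "(\<Sum>w\<in>words_of_shape X (Node l () r). F w) =
    (\<Sum>A\<in>{A. A \<subseteq> Y \<and> card A = size l}. \<Sum>u\<in>words_of_shape A l. \<Sum>v\<in>words_of_shape (Y - A) r.
       F (u @ Max X # v))"
proof -
  have "finite Y" using assms(1) by (simp add: Y_def)
  then have fin: "finite {A. A \<subseteq> Y \<and> card A = size l}" "finite A" if "A \<subseteq> Y" for A
    using that by (auto intro: finite_subset)
  have "(\<Sum>w\<in>words_of_shape X (Node l () r). F w) =
      (\<Sum>x\<in>(SIGMA A:{A. A \<subseteq> Y \<and> card A = size l}. words_of_shape A l \<times> words_of_shape (Y - A) r).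
        F (case x of (A, u, v) \<Rightarrow> u @ Max X # v))"
    unfolding Y_def by (rule sum.reindex_bij_betw[OF words_of_shape_Node_bij[OF assms(1,2)], symmetric])
  also have "\<dots> = (\<Sum>A\<in>{A. A \<subseteq> Y \<and> card A = size l}.
      \<Sum>p\<in>words_of_shape A l \<times> words_of_shape (Y - A) r. F (fst p @ Max X # snd p))"
    using fin \<open>finite Y\<close> by (subst sum.Sigma) (auto simp: finite_words_of_shape split_def)
  also have "\<dots> = (\<Sum>A\<in>{A. A \<subseteq> Y \<and> card A = size l}. \<Sum>u\<in>words_of_shape A l.
      \<Sum>v\<in>words_of_shape (Y - A) r. F (u @ Max X # v))"
    by (simp add: sum.cartesian_product split_def)
  finally show ?thesis .
qed

lemma invs_words_of_shape_Node:
  assumes "finite X" "A \<subseteq> X - {Max X}" "u \<in> words_of_shape A l" "v \<in> words_of_shape (X - {Max X} - A) r"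
  shows "invs (u @ Max X # v) = invs u + invs v + size r + set_crossings A (X - {Max X} - A)"
proof -
  from assms(3,4) have u: "distinct u" "set u = A"
    and v: "distinct v" "set v = X - {Max X} - A" "shape (dtree v) = r"
    by (auto simp: words_of_shape_def)
  moreover have "z < Max X" if "z \<in> X - {Max X}" for z
    using that assms(1) by (simp add: order.not_eq_order_implies_strict)
  ultimately have "invs (u @ Max X # v) = invs u + invs v + length v + crossings u v"
    using assms(2) by (intro invs_split_max) auto
  moreover have "length v = size r"
    using arg_cong[OF v(3), of size] v(1) by (simp add: size_dtree)
  ultimately show ?thesis
    using u v by (simp add: crossings_eq_set_crossings)
qed

lemma qhook_length_formula:
  "finite X \<Longrightarrow> card X = size t \<Longrightarrow>
   (\<Sum>w\<in>words_of_shape X t. qq ^ invs w) = qq ^ tree_invs t * qpoch (size t) / qhook t"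
proof (induction t arbitrary: X)
  case Leaf
  then show ?case by (simp add: words_of_shape_Leaf qpoch_0)
next
  case (Node l x r)
  define Y where "Y = X - {Max X}"
  have "X \<noteq> {}" using Node.prems by auto
  with Node.prems have "finite Y" and card_Y: "card Y = size l + size r"
    by (auto simp: Y_def)
  let ?S = "{A. A \<subseteq> Y \<and> card A = size l}"
  have word: "qq ^ invs (u @ Max X # v) =
      qq ^ (size r + set_crossings A (Y - A)) * (qq ^ invs u * qq ^ invs v)"
    if "A \<in> ?S" "u \<in> words_of_shape A l" "v \<in> words_of_shape (Y - A) r" for A u v
    using that invs_words_of_shape_Node[OF Node.prems(1), of A u l v r]
    by (simp add: Y_def power_add)
  have subtrees: "(\<Sum>u\<in>words_of_shape A l. qq ^ invs u) = qq ^ tree_invs l * qpoch (size l) / qhook l"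
    "(\<Sum>v\<in>words_of_shape (Y - A) r. qq ^ invs v) = qq ^ tree_invs r * qpoch (size r) / qhook r"
    if "A \<in> ?S" for A
    using that Node.IH[of A] Node.IH[of "Y - A"] \<open>finite Y\<close> card_Y
    by (auto simp: card_Diff_subset finite_subset)
  have "(\<Sum>w\<in>words_of_shape X (Node l x r). qq ^ invs w) =
      (\<Sum>A\<in>?S. \<Sum>u\<in>words_of_shape A l. \<Sum>v\<in>words_of_shape (Y - A) r. qq ^ invs (u @ Max X # v))"
    using sum_words_of_shape_Node[OF Node.prems(1) \<open>X \<noteq> {}\<close>] by (simp add: Y_def)
  also have "\<dots> = (\<Sum>A\<in>?S. \<Sum>u\<in>words_of_shape A l. \<Sum>v\<in>words_of_shape (Y - A) r.
        qq ^ (size r + set_crossings A (Y - A)) * (qq ^ invs u * qq ^ invs v))"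
    by (intro sum.cong refl) (simp add: word)
  also have "\<dots> = (\<Sum>A\<in>?S. qq ^ (size r + set_crossings A (Y - A)) *
      ((\<Sum>u\<in>words_of_shape A l. qq ^ invs u) * (\<Sum>v\<in>words_of_shape (Y - A) r. qq ^ invs v)))"
    by (intro sum.cong refl) (subst sum_product, simp only: sum_distrib_left)
  also have "\<dots> = (\<Sum>A\<in>?S. qq ^ (size r + set_crossings A (Y - A)) *
      ((qq ^ tree_invs l * qpoch (size l) / qhook l) * (qq ^ tree_invs r * qpoch (size r) / qhook r)))"
    by (intro sum.cong refl) (simp only: subtrees)
  also have "\<dots> = qq ^ (size r + tree_invs l + tree_invs r) * qpoch (size l) * qpoch (size r) /
      (qhook l * qhook r) * qbinomial Y (size l)"
    unfolding qbinomial_def sum_distrib_left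
    by (intro sum.cong refl) (simp add: power_add field_simps qhook_nonzero)
  also have "\<dots> = qq ^ (size r + tree_invs l + tree_invs r) * qpoch (size l + size r) / (qhook l * qhook r)"
    using qbinomial_qpoch[OF \<open>finite Y\<close>, of "size l"] card_Y by (simp add: algebra_simps)
  also have "\<dots> = qq ^ tree_invs (Node l x r) * qpoch (size (Node l x r)) / qhook (Node l x r)"
    using qq_power_neq_one[of "Suc (size l + size r)"]
    by (simp add: qpoch_Suc add_ac del: power_Suc)
  finally show ?case .
qed


section \<open>Sylvester classes\<close>

fun canon_word :: "nat \<Rightarrow> unit tree \<Rightarrow> nat list" where
  "canon_word c Leaf = []"
| "canon_word c (Node l x r) = canon_word c l @ [c + size l + size r + 1] @ canon_word (c + size l) r"

lemma length_canon_word [simp]: "length (canon_word c t) = size t"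
  by (induction t arbitrary: c) auto

lemma set_canon_word: "set (canon_word c t) = {c + 1..c + size t}"
proof (induction t arbitrary: c)
  case (Node l x r)
  show ?case
    using Node.IH(1)[of c] Node.IH(2)[of "c + size l"] by auto
qed simp

lemma distinct_canon_word: "distinct (canon_word c t)"
  by (induction t arbitrary: c) (auto simp: set_canon_word)

lemma canon_word_shift: "canon_word c t = map (\<lambda>y. y + c) (canon_word 0 t)"
proof (induction t arbitrary: c)
  case (Node l x r)
  show ?case
    using Node.IH(1)[of c] Node.IH(2)[of "c + size l"] Node.IH(2)[of "size l"] by simp
qed simp

lemma canon_word_minimal:
  "shape (dtree (canon_word c t)) = t \<and> invs (canon_word c t) = tree_invs t"
proof (induction t arbitrary: c)
  case (Node l x r)
  define m where "m = c + size l + size r + 1"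
  have below: "\<forall>y\<in>set (canon_word c l). y < m" "\<forall>y\<in>set (canon_word (c + size l) r). y < m"
    by (auto simp: set_canon_word m_def)
  moreover have "distinct (canon_word c l @ m # canon_word (c + size l) r)"
    using below by (auto simp: distinct_canon_word set_canon_word)
  moreover have "crossings (canon_word c l) (canon_word (c + size l) r) = 0"
    by (simp add: crossings_eq_set_crossings distinct_canon_word set_crossings_eq_0_iff set_canon_word)
  ultimately show ?case
    using Node.IH[of c] Node.IH[of "c + size l"]
    by (simp add: m_def dtree_append_max invs_split_max)
qed simp

definition position :: "nat list \<Rightarrow> nat \<Rightarrow> nat" where
  "position s i = (THE p. p < length s \<and> s ! p = i)"

lemma position:
  assumes "distinct s" "i \<in> set s"
  shows "position s i < length s" "s ! position s i = i"
proof -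
  from assms obtain p where p: "p < length s" "s ! p = i"
    by (auto simp: in_set_conv_nth)
  with assms(1) have "\<exists>!p. p < length s \<and> s ! p = i"
    by (metis nth_eq_iff_index_eq)
  then show "position s i < length s" "s ! position s i = i"
    unfolding position_def by (metis (mono_tags, lifting) theI')+
qed

lemma position_nth: "distinct s \<Longrightarrow> p < length s \<Longrightarrow> position s (s ! p) = p"
  using position[of s "s ! p"] nth_eq_iff_index_eq by auto

lemma perms_length: "s \<in> perms n \<Longrightarrow> length s = n"
  unfolding perms_def using distinct_card by fastforce

lemma finite_perms: "finite (perms n)"
  by (rule finite_subset[of _ "{xs. set xs \<subseteq> {1..n} \<and> length xs = n}"])
    (auto simp: perms_length perms_def finite_lists_length_eq)

lemma length_perm_inverse [simp]: "length (perm_inverse s) = length s"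
  by (simp add: perm_inverse_def del: upt_Suc)

lemma nth_perm_inverse: "i < length s \<Longrightarrow> perm_inverse s ! i = position s (i + 1) + 1"
  by (simp add: perm_inverse_def position_def del: upt_Suc)

lemma perm_inverse_perms:
  assumes "s \<in> perms n"
  shows "perm_inverse s \<in> perms n"
proof -
  have s: "distinct s" "set s = {1..n}" "length s = n"
    using assms perms_length by (auto simp: perms_def)
  have "perm_inverse s = map (\<lambda>i. position s i + 1) [1..<n + 1]"
    using s(3) by (simp add: perm_inverse_def position_def del: upt_Suc)
  moreover have "inj_on (\<lambda>i. position s i + 1) {1..n}"
    using s position(2)[of s] by (metis (no_types, lifting) add_right_cancel inj_onI)
  moreover have "(\<lambda>i. position s i + 1) ` {1..n} = {1..n}"
  proof
    show "(\<lambda>i. position s i + 1) ` {1..n} \<subseteq> {1..n}"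
      using s position(1)[of s] by (auto simp: Suc_le_eq)
    show "{1..n} \<subseteq> (\<lambda>i. position s i + 1) ` {1..n}"
    proof
      fix k assume k: "k \<in> {1..n}"
      with s have "position s (s ! (k - 1)) + 1 = k" "s ! (k - 1) \<in> {1..n}"
        by (auto simp: position_nth)
      then show "k \<in> (\<lambda>i. position s i + 1) ` {1..n}"
        by (metis image_eqI)
    qed
  qed
  ultimately show ?thesis
    by (simp add: perms_def distinct_map atLeastLessThanSuc_atLeastAtMost del: upt_Suc)
qed

lemma perm_inverse_perm_inverse:
  assumes "s \<in> perms n"
  shows "perm_inverse (perm_inverse s) = s"
proof (rule nth_equalityI)
  fix i assume "i < length (perm_inverse (perm_inverse s))"
  then have i: "i < length s" by simp
  have s: "distinct s" "set s = {1..n}" "length s = n"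
    using assms perms_length by (auto simp: perms_def)
  from i have "s ! i \<in> set s" by simp
  with s have si: "s ! i \<in> {1..n}" "s ! i - 1 < length s"
    by auto
  have "perm_inverse s ! (s ! i - 1) = i + 1"
    using nth_perm_inverse[OF si(2)] si(1) s(1) i by (simp add: position_nth)
  then have "position (perm_inverse s) (i + 1) = s ! i - 1"
    using position_nth[of "perm_inverse s" "s ! i - 1"] perm_inverse_perms[OF assms] si(2)
    by (simp add: perms_def)
  then show "perm_inverse (perm_inverse s) ! i = s ! i"
    using si i by (simp add: nth_perm_inverse)
qed simp

lemma bij_perm_inverse: "bij_betw perm_inverse (perms n) (perms n)"
  by (rule bij_betwI[of _ _ _ perm_inverse]) (auto simp: perm_inverse_perms perm_inverse_perm_inverse)

text \<open>An inversion (i, j) of the inverse is mapped to the inversion (s^-1(j), s^-1(i)) of s.\<close>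

lemma invs_perm_inverse_le:
  assumes "s \<in> perms n"
  shows "invs (perm_inverse s) \<le> invs s"
proof -
  have s: "distinct s" "set s = {1..n}" "length s = n"
    using assms perms_length by (auto simp: perms_def)
  then have pos: "position s i < n" "s ! position s i = i" if "i \<in> {1..n}" for i
    using that position[of s i] by auto
  let ?A = "{(i, j). i < j \<and> j < length (perm_inverse s) \<and> perm_inverse s ! j < perm_inverse s ! i}"
  let ?B = "{(i, j). i < j \<and> j < length s \<and> s ! j < s ! i}"
  let ?f = "\<lambda>(i, j). (position s (j + 1), position s (i + 1))"
  have "inj_on ?f ?A"
  proof (rule inj_onI)
    fix x y assume "x \<in> ?A" "y \<in> ?A" "?f x = ?f y"
    moreover obtain i j i' j' where "x = (i, j)" "y = (i', j')"
      by (cases x, cases y) auto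
    ultimately have "(i, j) \<in> ?A" "(i', j') \<in> ?A"
      and "position s (j + 1) = position s (j' + 1)" "position s (i + 1) = position s (i' + 1)"
      by auto
    moreover from this s have "i + 1 \<in> {1..n}" "j + 1 \<in> {1..n}" "i' + 1 \<in> {1..n}" "j' + 1 \<in> {1..n}"
      by auto
    ultimately have "i + 1 = i' + 1" "j + 1 = j' + 1"
      using pos(2) by metis+
    with \<open>x = (i, j)\<close> \<open>y = (i', j')\<close> show "x = y" by simp
  qed
  moreover have "?f ` ?A \<subseteq> ?B"
  proof (rule image_subsetI)
    fix x assume "x \<in> ?A"
    moreover obtain i j where x: "x = (i, j)"
      by (cases x)
    ultimately have ij: "i < j" "j < n" "perm_inverse s ! j < perm_inverse s ! i"
      using s by auto
    then have "position s (j + 1) < position s (i + 1)"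
      using s(3) by (simp add: nth_perm_inverse)
    from ij have "i + 1 \<in> {1..n}" "j + 1 \<in> {1..n}" by auto
    with ij \<open>position s (j + 1) < _\<close> pos show "?f x \<in> ?B"
      using s x by simp
  qed
  moreover have "finite ?B"
    by (rule finite_subset[of _ "{..<length s} \<times> {..<length s}"]) auto
  ultimately show ?thesis
    unfolding invs_def by (intro card_inj_on_le)
qed

lemma invs_perm_inverse: "s \<in> perms n \<Longrightarrow> invs (perm_inverse s) = invs s"
  using invs_perm_inverse_le[of s n] invs_perm_inverse_le[OF perm_inverse_perms, of s n]
  by (simp add: perm_inverse_perm_inverse)

text \<open>The minimal element of the sylvester class of shape t.\<close>

fun min_perm :: "unit tree \<Rightarrow> nat list" where
  "min_perm Leaf = []"
| "min_perm (Node l x r) = min_perm l @ map (\<lambda>y. y + size l + 1) (min_perm r) @ [size l + 1]"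

lemma length_min_perm [simp]: "length (min_perm t) = size t"
  by (induction t) auto

lemma min_perm_canon_word:
  "i < size t \<Longrightarrow> 1 \<le> min_perm t ! i \<and> min_perm t ! i \<le> size t \<and>
     canon_word 0 t ! (min_perm t ! i - 1) = i + 1"
proof (induction t arbitrary: i)
  case (Node l x r)
  define a b where "a = size l" and "b = size r"
  have canon: "canon_word 0 (Node l x r) = canon_word 0 l @ [a + b + 1] @ canon_word a r"
    by (simp add: a_def b_def)
  have perm: "min_perm (Node l x r) = min_perm l @ map (\<lambda>y. y + a + 1) (min_perm r) @ [a + 1]"
    by (simp add: a_def)
  consider "i < a" | "a \<le> i" "i < a + b" | "i = a + b"
    using Node.prems by (fastforce simp: a_def b_def)
  then show ?case
  proof cases
    case 1
    with Node.IH(1)[of i] have "1 \<le> min_perm l ! i" "min_perm l ! i \<le> a"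
      "canon_word 0 l ! (min_perm l ! i - 1) = i + 1"
      by (simp_all add: a_def)
    moreover from this have "min_perm l ! i - 1 < a"
      by linarith
    ultimately show ?thesis
      unfolding canon perm using 1 by (simp add: nth_append a_def b_def)
  next
    case 2
    define j where "j = i - a"
    with 2 have j: "j < b" "i = a + j" by auto
    with Node.IH(2)[of j] have "1 \<le> min_perm r ! j" "min_perm r ! j \<le> b"
      "canon_word 0 r ! (min_perm r ! j - 1) = j + 1"
      by (simp_all add: b_def)
    moreover have "canon_word a r ! (min_perm r ! j - 1) = canon_word 0 r ! (min_perm r ! j - 1) + a"
      using calculation by (subst canon_word_shift) (simp add: b_def)
    ultimately show ?thesis
      unfolding canon perm using j by (simp add: nth_append a_def b_def)
  next
    case 3
    then show ?thesis
      unfolding canon perm by (simp add: nth_append a_def b_def)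
  qed
qed simp

lemma perm_inverse_canon_word: "perm_inverse (canon_word 0 t) = min_perm t"
proof (rule nth_equalityI)
  fix i assume "i < length (perm_inverse (canon_word 0 t))"
  then have i: "i < size t" by simp
  have bounds: "1 \<le> min_perm t ! i" "min_perm t ! i \<le> size t"
    and canon: "canon_word 0 t ! (min_perm t ! i - 1) = i + 1"
    using min_perm_canon_word[OF i] by auto
  then have "min_perm t ! i - 1 < size t"
    by linarith
  with canon have "position (canon_word 0 t) (i + 1) = min_perm t ! i - 1"
    using position_nth[OF distinct_canon_word, of "min_perm t ! i - 1" 0 t] by simp
  with i bounds show "perm_inverse (canon_word 0 t) ! i = min_perm t ! i"
    by (simp add: nth_perm_inverse)
qed simp

lemma canon_word_perms: "canon_word 0 t \<in> perms (size t)"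
  by (simp add: perms_def distinct_canon_word set_canon_word)

lemma min_perm_perms: "min_perm t \<in> perms (size t)"
  using perm_inverse_perms[OF canon_word_perms] perm_inverse_canon_word by simp

lemma perm_inverse_min_perm: "perm_inverse (min_perm t) = canon_word 0 t"
  using perm_inverse_perm_inverse[OF canon_word_perms] perm_inverse_canon_word by simp

lemma invs_min_perm: "invs (min_perm t) = tree_invs t"
  using invs_perm_inverse[OF canon_word_perms] perm_inverse_canon_word canon_word_minimal by simp

lemma tree_invs_le_invs_perm:
  "b \<in> perms n \<Longrightarrow> tree_invs (shape (dtree (perm_inverse b))) \<le> invs b"
  using perm_inverse_perms[of b n] tree_invs_le_invs[of "perm_inverse b"] invs_perm_inverse[of b n]
  by (auto simp: perms_def)

lemma perm_eq_min_perm: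
  assumes "a \<in> perms n" "shape (dtree (perm_inverse a)) = t" "invs a \<le> tree_invs t"
  shows "a = min_perm t"
proof -
  have "invs (perm_inverse a) = tree_invs t"
    using assms tree_invs_le_invs_perm[OF assms(1)] invs_perm_inverse[OF assms(1)] by simp
  moreover have "perm_inverse a \<in> perms n" "size t = n"
    using perm_inverse_perms[OF assms(1)] assms(2) perms_length[of "perm_inverse a" n]
    by (auto simp: size_dtree perms_def)
  ultimately have "perm_inverse a = canon_word 0 t"
    using assms(2) canon_word_minimal[of 0 t]
    by (intro minimal_word_unique) (simp_all add: perms_def set_canon_word distinct_canon_word)
  then have "perm_inverse (perm_inverse a) = min_perm t"
    by (simp add: perm_inverse_canon_word)
  then show ?thesis
    by (simp add: perm_inverse_perm_inverse[OF assms(1)])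
qed

lemma sylv_min_eq_min_perm:
  assumes "s \<in> perms n"
  shows "sylv_min n s = min_perm (shape (dtree (perm_inverse s)))"
proof -
  define t where "t = shape (dtree (perm_inverse s))"
  have "size t = n"
    using perm_inverse_perms[OF assms] perms_length[OF assms] by (simp add: t_def size_dtree perms_def)
  then have "min_perm t \<in> sylv_class n s"
    using min_perm_perms[of t] perm_inverse_min_perm[of t] canon_word_minimal[of 0 t]
    by (simp add: sylv_class_def sylv_equiv_def t_def)
  moreover have "tree_invs t \<le> invs b" if "b \<in> sylv_class n s" for b
    using that tree_invs_le_invs_perm by (auto simp: sylv_class_def sylv_equiv_def t_def)
  moreover have "a = min_perm t" if "a \<in> sylv_class n s" "invs a \<le> tree_invs t" for a
    using that perm_eq_min_perm by (auto simp: sylv_class_def sylv_equiv_def t_def)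
  ultimately show ?thesis
    unfolding sylv_min_def t_def[symmetric] invs_min_perm[symmetric]
    by (intro the_equality) auto
qed

definition left_greater :: "nat list \<Rightarrow> nat \<Rightarrow> nat" where
  "left_greater w j = length (filter (\<lambda>x. w ! j < x) (take j w))"

lemma invD_eq_sum_left_greater:
  "invD w E = (\<Sum>j\<in>{j. j < length w \<and> j \<in> E}. left_greater w j)"
proof -
  let ?J = "{j. j < length w \<and> j \<in> E}"
  let ?S = "SIGMA j:?J. {i. i < j \<and> w ! j < w ! i}"
  have "{(i, j). i < j \<and> j < length w \<and> w ! j < w ! i \<and> j \<in> E} = prod.swap ` ?S"
    by auto
  then have "invD w E = card ?S"
    unfolding invD_def by (simp add: card_image)
  also have "\<dots> = (\<Sum>j\<in>?J. card {i. i < j \<and> w ! j < w ! i})"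
    by (rule card_SigmaI) auto
  also have "\<dots> = (\<Sum>j\<in>?J. left_greater w j)"
    unfolding left_greater_def length_filter_conv_card by (intro sum.cong arg_cong[where f = card]) auto
  finally show ?thesis .
qed

lemma left_greater_min_perm: "j < size t \<Longrightarrow> left_greater (min_perm t) j = right_sizes t ! j"
proof (induction t arbitrary: j)
  case (Node l x r)
  define a b A B where "a = size l" and "b = size r" and "A = min_perm l"
    and "B = map (\<lambda>y. y + a + 1) (min_perm r)"
  have perm: "min_perm (Node l x r) = A @ B @ [a + 1]" and sizes: "right_sizes (Node l x r) = right_sizes l @ right_sizes r @ [b]"
    and lengths: "length A = a" "length B = b"
    by (simp_all add: a_def b_def A_def B_def)
  have A: "\<forall>y\<in>set A. y \<le> a" and B: "\<forall>y\<in>set B. a + 1 < y"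
    using min_perm_perms[of l] min_perm_perms[of r] by (auto simp: A_def B_def a_def perms_def)
  consider "j < a" | "a \<le> j" "j < a + b" | "j = a + b"
    using Node.prems by (fastforce simp: a_def b_def)
  then show ?case
  proof cases
    case 1
    then show ?thesis
      using Node.IH(1)[of j] lengths unfolding perm sizes left_greater_def
      by (simp add: nth_append A_def a_def)
  next
    case 2
    define k where "k = j - a"
    with 2 have k: "k < b" "j = a + k" by auto
    have "filter (\<lambda>y. min_perm r ! k + a + 1 < y) A = []"
      using A by (auto simp: filter_empty_conv)
    moreover have "filter (\<lambda>y. min_perm r ! k + a + 1 < y) (take k B) =
        map (\<lambda>y. y + a + 1) (filter (\<lambda>y. min_perm r ! k < y) (take k (min_perm r)))"
      unfolding B_def take_map filter_map by (simp add: o_def)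
    ultimately have "left_greater (min_perm (Node l x r)) j = left_greater (min_perm r) k"
      unfolding left_greater_def perm using k lengths by (simp add: nth_append B_def)
    then show ?thesis
      using Node.IH(2)[of k] k unfolding sizes by (simp add: nth_append a_def b_def)
  next
    case 3
    have "filter (\<lambda>y. a + 1 < y) A = []" "filter (\<lambda>y. a + 1 < y) B = B"
      using A B by (auto simp: filter_empty_conv filter_id_conv)
    with 3 show ?thesis
      unfolding left_greater_def perm sizes using lengths by (simp add: nth_append a_def b_def)
  qed
qed simp

lemma invD_min_perm: "invD (min_perm t) E = (\<Sum>j\<in>{j. j < size t \<and> j \<in> E}. right_sizes t ! j)"
  unfolding invD_eq_sum_left_greater by (rule sum.cong) (auto simp: left_greater_min_perm)

text \<open>Grouping the permutations by the shape of the decreasing tree of their inverse, each group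
  is evaluated by the q-hook length formula.\<close>

lemma sum_perms_sylv_min:
  "(\<Sum>s\<in>perms n. let a = sylv_min n s in qq ^ (invs s - invs a + invD a E)) =
   (\<Sum>t\<in>trees n. qpoch n / qhook t * qq ^ invD (min_perm t) E)"
proof -
  define G where "G u = qq ^ (invs u - tree_invs (shape (dtree u)) + invD (min_perm (shape (dtree u))) E)"
    for u
  have "(\<Sum>s\<in>perms n. let a = sylv_min n s in qq ^ (invs s - invs a + invD a E)) =
      (\<Sum>u\<in>perms n. let a = sylv_min n (perm_inverse u) in qq ^ (invs (perm_inverse u) - invs a + invD a E))"
    by (rule sum.reindex_bij_betw[OF bij_perm_inverse, symmetric])
  also have "\<dots> = (\<Sum>u\<in>perms n. G u)"
    using sylv_min_eq_min_perm[OF perm_inverse_perms] perm_inverse_perm_inverse invs_perm_inverse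
    by (intro sum.cong refl) (simp add: G_def Let_def invs_min_perm)
  also have "\<dots> = (\<Sum>t\<in>trees n. \<Sum>u\<in>{u \<in> perms n. shape (dtree u) = t}. G u)"
    by (rule sum.group[symmetric, OF finite_perms finite_trees])
      (auto simp: trees_def size_dtree perms_def perms_length)
  also have "\<dots> = (\<Sum>t\<in>trees n. qpoch n / qhook t * qq ^ invD (min_perm t) E)"
  proof (rule sum.cong[OF refl])
    fix t assume "t \<in> trees n"
    then have "size t = n" by (simp add: trees_def)
    have "{u \<in> perms n. shape (dtree u) = t} = words_of_shape {1..n} t"
      by (auto simp: perms_def words_of_shape_def)
    moreover have "G u = qq ^ invs u * (qq ^ invD (min_perm t) E / qq ^ tree_invs t)"
      if "u \<in> words_of_shape {1..n} t" for u
      using that tree_invs_le_invs[of u] qq_nonzero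
      by (auto simp: G_def words_of_shape_def power_add power_diff)
    ultimately have "(\<Sum>u\<in>{u \<in> perms n. shape (dtree u) = t}. G u) =
        (\<Sum>u\<in>words_of_shape {1..n} t. qq ^ invs u) * (qq ^ invD (min_perm t) E / qq ^ tree_invs t)"
      by (simp add: sum_distrib_right sum_divide_distrib)
    also have "\<dots> = qpoch n / qhook t * qq ^ invD (min_perm t) E"
      using qhook_length_formula[of "{1..n}" t] \<open>size t = n\<close> qq_nonzero by simp
    finally show "(\<Sum>u\<in>{u \<in> perms n. shape (dtree u) = t}. G u) =
        qpoch n / qhook t * qq ^ invD (min_perm t) E" .
  qed
  finally show ?thesis .
qed


lemma descents_Nil [simp]: "descents [] = {}"
  by (simp add: descents_def)

lemma descents_eq_image: "descents I = (\<lambda>i. sum_list (take i I)) ` {1..<length I}"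
  by (auto simp: descents_def)

lemma descents_Cons:
  "descents (k # I) = (if I = [] then {} else insert k ((+) k ` descents I))"
proof (cases I)
  case (Cons j J)
  have "{1..<length (k # I)} = insert 1 (Suc ` {1..<length I})"
    using Cons by (auto simp: image_iff)
  then have "descents (k # I) =
      insert k ((\<lambda>i. sum_list (take (Suc i) (k # I))) ` {1..<length I})"
    unfolding descents_eq_image by (simp add: image_image del: image_Suc_atLeastLessThan)
  with Cons show ?thesis
    by (simp add: descents_eq_image image_image)
qed (simp add: descents_def)

lemma comps_Cons: "k # I \<in> comps n \<longleftrightarrow> k \<noteq> 0 \<and> k \<le> n \<and> I \<in> comps (n - k)"
  by (auto simp: comps_def)

lemma comps_0: "comps 0 = {[]}"
  by (auto simp: comps_def) (metis list.exhaust list.set_intros(1) add_is_0 sum_list.Cons)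

lemma comps_nonempty: "I \<in> comps n \<Longrightarrow> n \<ge> 1 \<Longrightarrow> I \<noteq> []"
  by (auto simp: comps_def)

lemma descents_comps: "I \<in> comps n \<Longrightarrow> descents I \<subseteq> {1..<n} \<and> card (descents I) = length I - 1"
proof (induction I arbitrary: n)
  case Nil then show ?case by (simp add:)
next
  case (Cons k I)
  have k: "k \<ge> 1" "k \<le> n" "I \<in> comps (n - k)" using Cons.prems comps_Cons by auto
  show ?case
  proof (cases "I = []")
    case True then show ?thesis by (simp add: descents_Cons)
  next
    case False
    have IH: "descents I \<subseteq> {1..<n - k}" "card (descents I) = length I - 1" using Cons.IH[OF k(3)] by auto
    have nk: "n - k \<ge> 1" using k(3) False by (cases I) (auto simp: comps_def)
    have sub: "insert k ((+) k ` descents I) \<subseteq> {1..<n}" using IH(1) k nk by (auto simp: subset_iff)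
    have nin: "k \<notin> (+) k ` descents I" using IH(1) by auto
    have "card (insert k ((+) k ` descents I)) = Suc (card (descents I))"
      using nin by (simp add: card_image inj_on_def finite_subset[OF IH(1)])
    then show ?thesis using sub IH(2) False by (simp add: descents_Cons)
  qed
qed

lemma descents_inj: "I \<in> comps n \<Longrightarrow> J \<in> comps n \<Longrightarrow> descents I = descents J \<Longrightarrow> I = J"
proof (induction I arbitrary: J n)
  case Nil
  then show ?case by (cases J) (auto simp: comps_def)
next
  case (Cons k I)
  obtain k' J' where J: "J = k' # J'" using Cons.prems by (cases J) (auto simp: comps_def)
  have k: "k \<ge> 1" "I \<in> comps (n - k)" "k' \<ge> 1" "J' \<in> comps (n - k')"
    using Cons.prems J comps_Cons by auto
  show ?case
  proof (cases "I = []")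
    case True
    hence "descents J = {}" using Cons.prems by (simp add: descents_Cons)
    hence "J' = []" using J by (auto simp: descents_Cons split: if_splits)
    then show ?thesis using True J Cons.prems by (simp add: comps_def)
  next
    case False
    hence F2: "J' \<noteq> []" using Cons.prems J by (auto simp: descents_Cons split: if_splits)
    have dI: "descents (k # I) = insert k ((+) k ` descents I)" using False by (simp add: descents_Cons)
    have dJ: "descents J = insert k' ((+) k' ` descents J')" using F2 J by (simp add: descents_Cons)
    have pI: "descents I \<subseteq> {1..<n - k}" using descents_comps[OF k(2)] by auto
    have pJ: "descents J' \<subseteq> {1..<n - k'}" using descents_comps[OF k(4)] by auto
    have mI: "Min (descents (k # I)) = k" unfolding dI using pI by (intro Min_eqI) (auto intro: finite_subset)
    have mJ: "Min (descents J) = k'" unfolding dJ using pJ by (intro Min_eqI) (auto intro: finite_subset)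
    have kk: "k = k'" using mI mJ Cons.prems(3) by simp
    have "(+) k ` descents I = (+) k ` descents J'"
    proof -
      have "(+) k ` descents I = descents (k # I) - {k}" unfolding dI using pI by auto
      also have "\<dots> = descents J - {k}" using Cons.prems(3) by simp
      also have "\<dots> = (+) k ` descents J'" unfolding dJ kk using pJ by auto
      finally show ?thesis .
    qed
    hence "descents I = descents J'" using inj_image_eq_iff[of "(+) k"] by (simp add: inj_def)
    then have "I = J'" using Cons.IH[OF k(2)] k(4) kk by simp
    then show ?thesis using J kk by simp
  qed
qed

lemma descents_surj: "D \<subseteq> {1..<n} \<Longrightarrow> \<exists>I\<in>comps n. descents I = D"
proof (induction n arbitrary: D rule: less_induct)
  case (less n)
  show ?case
  proof (cases "D = {}")
    case True
    show ?thesis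
    proof (cases "n = 0")
      case True
      with \<open>D = {}\<close> show ?thesis by (intro bexI[of _ "[]"]) (simp_all add: comps_def)
    next
      case False
      with \<open>D = {}\<close> show ?thesis by (intro bexI[of _ "[n]"]) (simp_all add: comps_def descents_Cons)
    qed
  next
    case False
    define k where "k = Min D"
    have "finite D" using less.prems finite_subset by blast
    with False have "k \<in> D" "\<forall>d\<in>D. k \<le> d"
      by (simp_all add: k_def)
    with less.prems have k: "k \<in> D" "\<forall>d\<in>D. k \<le> d" "1 \<le> k" "k < n"
      by auto
    define D' where "D' = (\<lambda>d. d - k) ` (D - {k})"
    have "D' \<subseteq> {1..<n - k}"
      using k less.prems by (force simp: D'_def)
    with k less.IH[of "n - k" D'] obtain I where I: "I \<in> comps (n - k)" "descents I = D'"
      by auto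
    moreover have "(+) k ` D' = D - {k}"
      using k by (force simp: D'_def image_image image_iff)
    moreover have "I \<noteq> []"
      using I k by (auto simp: comps_def)
    ultimately have "k # I \<in> comps n" "descents (k # I) = D"
      using k by (auto simp: comps_def descents_Cons)
    then show ?thesis by blast
  qed
qed

lemma descents_bij: "bij_betw descents (comps n) (Pow {1..<n})"
proof (rule bij_betwI')
  show "descents I = descents J \<longleftrightarrow> I = J" if "I \<in> comps n" "J \<in> comps n" for I J
    using that descents_inj by blast
  show "descents I \<in> Pow {1..<n}" if "I \<in> comps n" for I
    using that descents_comps by blast
  show "\<exists>I\<in>comps n. D = descents I" if "D \<in> Pow {1..<n}" for D
    using that descents_surj[of D n] by auto
qed

lemma finite_comps: "finite (comps n)"
  using bij_betw_finite[OF descents_bij] by simp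

lemma conj_comp_desc:
  assumes "I \<in> comps n"
  shows "conj_comp I \<in> comps n \<and> descents (conj_comp I) = (\<lambda>d. n - d) ` ({1..n-1} - descents I)"
proof -
  have "(\<lambda>d. n - d) ` ({1..n-1} - descents I) \<subseteq> {1..<n}"
    by auto
  then have "\<exists>!J. J \<in> comps n \<and> descents J = (\<lambda>d. n - d) ` ({1..n-1} - descents I)"
    using descents_surj descents_inj by metis
  moreover have "sum_list I = n"
    using assms by (simp add: comps_def)
  ultimately show ?thesis
    unfolding conj_comp_def Let_def by (metis (lifting) theI')
qed

lemma prod_atLeastLessThan_shift:
  "(\<Prod>d\<in>{1..<m::nat}. f (d - 1)) = (\<Prod>i<m - 1. (f i :: 'a :: comm_monoid_mult))"
proof -
  have "bij_betw Suc {..<m - 1} {1..<m}"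
    by (rule bij_betwI[of _ _ _ "\<lambda>d. d - 1"]) auto
  from prod.reindex_bij_betw[OF this, of "\<lambda>d. f (d - 1)"] show ?thesis
    by simp
qed

lemma atLeastLessThan_minus_descents_Cons:
  assumes "k \<ge> 1" "w \<in> comps (L - k)" "w \<noteq> []" "k \<le> L"
  shows "{1..<L} - descents (k # w) = {1..<k} \<union> (+) k ` ({1..<L - k} - descents w)"
proof (intro set_eqI iffI)
  fix x assume x: "x \<in> {1..<L} - descents (k # w)"
  show "x \<in> {1..<k} \<union> (+) k ` ({1..<L - k} - descents w)"
  proof (cases "x < k")
    case False
    with x assms(3) have "k < x" "x - k \<notin> descents w"
      by (auto simp: descents_Cons image_iff)
    with x show ?thesis
      by (auto simp: image_iff intro!: bexI[of _ "x - k"])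
  qed (use x in auto)
next
  fix x assume "x \<in> {1..<k} \<union> (+) k ` ({1..<L - k} - descents w)"
  with assms descents_comps[OF assms(2)] show "x \<in> {1..<L} - descents (k # w)"
    by (auto simp: descents_Cons)
qed

lemma S_expansion_comps:
  "w \<in> comps (length xs) \<Longrightarrow>
     S_expansion xs w = (\<Prod>d\<in>{1..<length xs} - descents w. qq ^ (xs ! (d - 1)) - 1)"
proof (induction w arbitrary: xs)
  case Nil
  then show ?case by (simp add: comps_def)
next
  case (Cons k w)
  define L where "L = length xs"
  define f where "f d = qq ^ (xs ! (d - 1)) - 1" for d
  have k: "k \<ge> 1" "k \<le> L" "w \<in> comps (L - k)"
    using Cons.prems comps_Cons by (auto simp: L_def)
  have "(\<Prod>i<k - 1. qq ^ xs ! i - 1) = (\<Prod>d\<in>{1..<k}. f d)"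
    unfolding f_def by (rule prod_atLeastLessThan_shift[symmetric])
  with k have first: "S_expansion xs (k # w) = (\<Prod>d\<in>{1..<k}. f d) * S_expansion (drop k xs) w"
    by (simp add: L_def)
  show ?case
  proof (cases "w = []")
    case True
    with k have "k = L" by (simp add: comps_def)
    with True first show ?thesis by (simp add: descents_Cons f_def L_def)
  next
    case False
    have "S_expansion (drop k xs) w = (\<Prod>d\<in>{1..<L - k} - descents w. f (k + d))"
      using Cons.IH[of "drop k xs"] k unfolding f_def L_def
      by (auto simp: add.commute intro!: prod.cong)
    also have "\<dots> = (\<Prod>d\<in>(+) k ` ({1..<L - k} - descents w). f d)"
      by (simp add: prod.reindex inj_on_def)
    finally show ?thesis
      unfolding first L_def[symmetric] f_def[symmetric]
        atLeastLessThan_minus_descents_Cons[OF k(1,3) False k(2)]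
      by (subst prod.union_disjoint) auto
  qed
qed

lemma S_expansion_not_comps: "w \<notin> comps (length xs) \<Longrightarrow> S_expansion xs w = 0"
proof (induction w arbitrary: xs)
  case (Cons k w)
  then show ?case
    by (cases "k = 0 \<or> k > length xs") (auto simp: comps_Cons)
qed (simp add: comps_def)

lemma ribbon_apply:
  assumes "I \<in> comps n"
  shows "ribbon I w =
    (if w \<in> comps n \<and> descents w \<subseteq> descents I then (-1) ^ (length I - length w) else 0)"
proof -
  have "sum_list I = n" using assms by (simp add: comps_def)
  let ?S = "{J \<in> comps n. descents J \<subseteq> descents I}"
  have "ribbon I w = (\<Sum>J\<in>?S. (-1) ^ (length I - length J) * Spow J w)"
    unfolding ribbon_def \<open>sum_list I = n\<close> by simp
  also have "\<dots> = (\<Sum>J\<in>?S. if w = J then (-1) ^ (length I - length J) else 0)"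
    by (rule sum.cong) (auto simp: Spow_apply comps_def)
  also have "\<dots> = (if w \<in> ?S then (-1) ^ (length I - length w) else 0)"
    using finite_comps[of n] by (simp add: sum.delta)
  finally show ?thesis by simp
qed

text \<open>Inclusion-exclusion: expand \<Prod>_{d \<in> U - A} (x_d - 1) over the subsets of U - A.\<close>

lemma sum_supersets_alternating:
  fixes x :: "'b \<Rightarrow> 'a :: comm_ring_1"
  assumes "finite U" "A \<subseteq> U"
  shows "(\<Sum>E\<in>Pow U. (if A \<subseteq> E then (-1) ^ (card E - card A) else 0) * (\<Prod>d\<in>U - E. x d)) =
    (\<Prod>d\<in>U - A. x d - 1)"
proof -
  define F where "F E = (if A \<subseteq> E then (-1) ^ (card E - card A) else 0) * (\<Prod>d\<in>U - E. x d)" for E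
  have "finite A" using assms finite_subset by blast
  have "(\<Sum>E\<in>Pow U. F E) = (\<Sum>E\<in>(\<union>) A ` Pow (U - A). F E)"
  proof (rule sum.mono_neutral_right)
    show "\<forall>E\<in>Pow U - (\<union>) A ` Pow (U - A). F E = 0"
    proof
      fix E assume E: "E \<in> Pow U - (\<union>) A ` Pow (U - A)"
      then have "E \<noteq> A \<union> (E - A)"
        by blast
      then show "F E = 0"
        by (auto simp: F_def)
    qed
  qed (use assms in auto)
  also have "\<dots> = (\<Sum>B\<in>Pow (U - A). F (A \<union> B))"
    by (rule sum.reindex_cong[of "(\<union>) A"]) (auto intro!: inj_onI)
  also have "\<dots> = (\<Sum>B\<in>Pow (U - A). (-1) ^ card B * (\<Prod>d\<in>(U - A) - B. x d))"
  proof (rule sum.cong[OF refl])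
    fix B assume "B \<in> Pow (U - A)"
    then have "card (A \<union> B) - card A = card B"
      using \<open>finite A\<close> assms(1) finite_subset[of B U] by (subst card_Un_disjoint) auto
    moreover have "U - (A \<union> B) = (U - A) - B" by auto
    ultimately show "F (A \<union> B) = (-1) ^ card B * (\<Prod>d\<in>(U - A) - B. x d)"
      by (simp add: F_def)
  qed
  also have "\<dots> = (\<Prod>d\<in>U - A. x d - 1)"
    using prod_diff_conv_sum[of "U - A" x "\<lambda>_. 1"] assms(1) by simp
  finally show ?thesis
    unfolding F_def .
qed

lemma sum_comps_ribbon_coefficients:
  assumes "w \<in> comps n"
  shows "(\<Sum>I\<in>comps n. (if descents w \<subseteq> descents I then (-1) ^ (length I - length w) else 0) *
      (\<Prod>d\<in>{1..<n} - descents I. x d)) = (\<Prod>d\<in>{1..<n} - descents w. x d - (1::K))"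
proof -
  define F where "F E = (if descents w \<subseteq> E then (-1) ^ (card E - card (descents w)) else 0) *
    (\<Prod>d\<in>{1..<n} - E. x d)" for E
  have "length I - length w = card (descents I) - card (descents w)" if "I \<in> comps n" for I
    using that assms descents_comps[of I n] descents_comps[OF assms] comps_nonempty[of _ n]
    by (cases "n = 0") (auto simp: comps_0 Suc_le_eq)
  then have "(\<Sum>I\<in>comps n. (if descents w \<subseteq> descents I then (-1) ^ (length I - length w) else 0) *
      (\<Prod>d\<in>{1..<n} - descents I. x d)) = (\<Sum>I\<in>comps n. F (descents I))"
    by (intro sum.cong) (simp_all add: F_def)
  also have "\<dots> = (\<Sum>E\<in>Pow {1..<n}. F E)"
    by (rule sum.reindex_bij_betw[OF descents_bij])
  also have "\<dots> = (\<Prod>d\<in>{1..<n} - descents w. x d - 1)"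
    unfolding F_def using descents_comps[OF assms] by (intro sum_supersets_alternating) auto
  finally show ?thesis .
qed


section \<open>The ribbon expansion\<close>

lemma qq_power_invD_min_perm:
  assumes "I \<in> comps n" "t \<in> trees n"
  shows "qq ^ invD (min_perm t) (descents (conj_comp I)) =
    (\<Prod>d\<in>{1..<n} - descents I. qq ^ (rev (right_sizes t) ! (d - 1)))"
proof -
  have "size t = n" using assms(2) by (simp add: trees_def)
  have "{1..n - 1} = {1..<n}" by auto
  with conj_comp_desc[OF assms(1)]
  have "descents (conj_comp I) = (\<lambda>d. n - d) ` ({1..<n} - descents I)"
    by simp
  then have "{j. j < size t \<and> j \<in> descents (conj_comp I)} = (\<lambda>d. n - d) ` ({1..<n} - descents I)"
    unfolding \<open>size t = n\<close> by auto
  moreover have "inj_on (\<lambda>d. n - d) ({1..<n} - descents I)"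
    by (auto simp: inj_on_def)
  ultimately have "invD (min_perm t) (descents (conj_comp I)) =
      (\<Sum>d\<in>{1..<n} - descents I. right_sizes t ! (n - d))"
    unfolding invD_min_perm by (simp add: sum.reindex)
  also have "\<dots> = (\<Sum>d\<in>{1..<n} - descents I. rev (right_sizes t) ! (d - 1))"
    using \<open>size t = n\<close> by (intro sum.cong refl) (auto simp: rev_nth)
  finally show ?thesis
    by (simp add: power_sum)
qed

lemma qpoch_gtree_eq_ribbon_sum:
  "qpoch n * gtree n w = (\<Sum>I\<in>comps n. ribbon_coef n I * ribbon I w)"
proof (cases "w \<in> comps n")
  case False
  then show ?thesis
    by (simp add: gtree_def ribbon_apply S_expansion_not_comps trees_def)
next
  case True
  define x where "x t d = qq ^ (rev (right_sizes t) ! (d - 1))" for t d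
  have "ribbon_coef n I = (\<Sum>t\<in>trees n. qpoch n / qhook t * (\<Prod>d\<in>{1..<n} - descents I. x t d))"
    if "I \<in> comps n" for I
    unfolding ribbon_coef_def sum_perms_sylv_min x_def using qq_power_invD_min_perm[OF that] by simp
  then have "(\<Sum>I\<in>comps n. ribbon_coef n I * ribbon I w) =
      (\<Sum>I\<in>comps n. (\<Sum>t\<in>trees n. qpoch n / qhook t * (\<Prod>d\<in>{1..<n} - descents I. x t d)) *
        (if descents w \<subseteq> descents I then (-1) ^ (length I - length w) else 0))"
    by (intro sum.cong refl) (simp add: ribbon_apply True)
  also have "\<dots> = (\<Sum>t\<in>trees n. qpoch n / qhook t * (\<Sum>I\<in>comps n.
      (if descents w \<subseteq> descents I then (-1) ^ (length I - length w) else 0) *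
      (\<Prod>d\<in>{1..<n} - descents I. x t d)))"
    by (simp add: sum_distrib_right sum_distrib_left mult_ac sum.swap[of _ "trees n"])
  also have "\<dots> = (\<Sum>t\<in>trees n. qpoch n / qhook t * (\<Prod>d\<in>{1..<n} - descents w. x t d - 1))"
    by (simp only: sum_comps_ribbon_coefficients[OF True])
  also have "\<dots> = qpoch n * gtree n w"
    using True by (simp add: gtree_def sum_distrib_left trees_def S_expansion_comps x_def field_simps)
  finally show ?thesis ..
qed

theorem mainTheorem5:
  fixes g :: "nat \<Rightarrow> nsym" and n :: nat
  assumes g0: "g 0 = nsym_one"
    and grec: "\<And>m. m \<ge> 1 \<Longrightarrow>
        nsym_smult (qq ^ m - 1) (g m) =
        nsym_sum {1..m} (\<lambda>k. nsym_mult (S k)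
           (nsym_sum (wcomps (k + 1) (m - k)) (\<lambda>js. nsym_prod (map g js))))"
    and n: "n \<ge> 1"
  shows "nsym_smult (qpoch n) (g n) =
         nsym_sum (comps n) (\<lambda>I. nsym_smult (ribbon_coef n I) (ribbon I))"
proof -
  have "g n = gtree n"
  proof (rule rec_rhs_unique)
    show "g 0 = gtree 0"
      using g0 gtree_0 by simp
    show "nsym_smult (qq ^ m - 1) (g m) = rec_rhs g m" if "m \<ge> 1" for m
      using grec[OF that] unfolding rec_rhs_def coeff_pow_def .
    show "nsym_smult (qq ^ m - 1) (gtree m) = rec_rhs gtree m" for m
      by (rule gtree_rec)
  qed
  then show ?thesis
    by (simp add: fun_eq_iff qpoch_gtree_eq_ribbon_sum)
qed

end
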